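(* Let $X\in\mathscr K$ and $U\in L^2(\Omega)$, and let $\mathcal U(m)=\int_0^mU(\omega)\,d\omega$. Then $U-\operatorname{Proj}_{\mathscr H_X}U\in N_X\mathscr K$, or equivalently $\operatorname{Proj}_{\mathscr H_X}U=\operatorname{Proj}_{T_X\mathscr K}U$, if and only if $$(\operatorname{Proj}_{\mathscr H_X}U)(m)\le\frac{\mathcal U(m)-\mathcal U(m_l)}{m-m_l}$$ for every $m\in(m_l,m_r)$ and every maximal interval $(m_l,m_r)$ of $\Omega_X$.
   Context: $\Omega=(0,1)$ with Lebesgue measure. $\mathscr K=\{X\in L^2(\Omega):X\text{ nondecreasing}\}$, a closed convex cone. $N_X\mathscr K=\{W\in L^2(\Omega):\int_\Omega W(Y-X)\,dm\le0\ \forall Y\in\mathscr K\}$ is the normal cone; $T_X\mathscr K=\{U\in L^2(\Omega):\int_\Omega UW\,dm\le0\ \forall W\in N_X\mathscr K\}$ is the tangent cone, and $\operatorname{Proj}_{T_X\mathscr K}$ the metric projection onto it. $\Omega_X=\{m\in\Omega:X\text{ is constant in a neighborhood of }m\}$, a countable disjoint union of maximal open intervals. $\mathscr H_X=\{U\in L^2(\Omega):U\text{ constant on each interval }(m_l,m_r)\subset\Omega_X\}$, with orthogonal projection $\operatorname{Proj}_{\mathscr H_X}U$ equal to $U$ a.e. off $\Omega_X$ and to the average of $U$ over each maximal interval of $\Omega_X$ on that interval. *)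

theory Defs
  imports "HOL-Analysis.Analysis"
begin

text \<open>The probability space Omega = (0,1) with Lebesgue measure. Elements of L^2 are
represented by real functions; equality in L^2 is a.e. equality.\<close>

definition Om :: "real set" where
  "Om = {0<..<1}"

definition L2 :: "(real \<Rightarrow> real) set" where
  "L2 = {f. set_borel_measurable lebesgue Om f \<and> set_integrable lebesgue Om (\<lambda>x. (f x)\<^sup>2)}"

definition ip :: "(real \<Rightarrow> real) \<Rightarrow> (real \<Rightarrow> real) \<Rightarrow> real" where
  "ip f g = (LINT x:Om|lebesgue. f x * g x)"

definition Kcone :: "(real \<Rightarrow> real) set" where
  "Kcone = {X \<in> L2. mono_on Om X}"

definition normal_cone :: "(real \<Rightarrow> real) \<Rightarrow> (real \<Rightarrow> real) set" where
  "normal_cone X = {W \<in> L2. \<forall>Y\<in>Kcone. ip W (\<lambda>x. Y x - X x) \<le> 0}"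

definition tangent_cone :: "(real \<Rightarrow> real) \<Rightarrow> (real \<Rightarrow> real) set" where
  "tangent_cone X = {U \<in> L2. \<forall>W\<in>normal_cone X. ip U W \<le> 0}"

definition is_proj :: "(real \<Rightarrow> real) set \<Rightarrow> (real \<Rightarrow> real) \<Rightarrow> (real \<Rightarrow> real) \<Rightarrow> bool" where
  "is_proj T U P \<longleftrightarrow> P \<in> T \<and>
     (\<forall>V\<in>T. ip (\<lambda>x. U x - P x) (\<lambda>x. U x - P x) \<le> ip (\<lambda>x. U x - V x) (\<lambda>x. U x - V x))"

definition OmX :: "(real \<Rightarrow> real) \<Rightarrow> real set" where
  "OmX X = {m \<in> Om. \<exists>e>0. ball m e \<subseteq> Om \<and> (\<forall>y\<in>ball m e. X y = X m)}"

definition max_int :: "(real \<Rightarrow> real) \<Rightarrow> real \<Rightarrow> real \<Rightarrow> bool" where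
  "max_int X a b \<longleftrightarrow> a < b \<and> {a<..<b} \<subseteq> OmX X \<and> a \<notin> OmX X \<and> b \<notin> OmX X"

text \<open>Orthogonal projection onto H_X: averages over maximal intervals of OmX X.\<close>
definition projH :: "(real \<Rightarrow> real) \<Rightarrow> (real \<Rightarrow> real) \<Rightarrow> real \<Rightarrow> real" where
  "projH X U m =
     (if \<exists>a b. max_int X a b \<and> m \<in> {a<..<b}
      then (let (a, b) = (SOME (a, b). max_int X a b \<and> m \<in> {a<..<b})
            in (LINT w:{a<..<b}|lebesgue. U w) / (b - a))
      else U m)"

end

(* The residual W = U - Proj_H U has mean zero on every maximal interval (a,b) of Omega_X and
   vanishes off Omega_X, and the condition of the theorem says exactly that its partial integrals
   over (a,m] are nonnegative.

   Necessity: X + 1_(m,1) is again nondecreasing, so testing the normal cone with it gives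
   <W, 1_(m,1)> <= 0, which is the condition at m; the same direction lies in the tangent cone, so
   the variational inequality of the projection gives it as well.

   Sufficiency: for nondecreasing Y, the superlevel sets of Y on (a,b) are final segments, on which
   W has nonpositive integral, so a layer-cake decomposition gives int_a^b W Y <= 0; summing over
   the maximal intervals shows W is a normal vector. For the projection one needs in addition that
   Proj_H U lies in the tangent cone, i.e. that every normal vector W' is orthogonal to H_X.
   Testing with X +- g(X)/L for bounded nondecreasing L-Lipschitz g makes W' orthogonal to the
   indicators of {X > k} and {X >= k}; these realise 1_(t,1) for every t outside Omega_X, so all
   those tail integrals of W' vanish. Hence W' has mean zero on each maximal interval and, by
   uniqueness of measures with equal tails, vanishes a.e. off Omega_X. So Proj_H U is a tangent
   vector orthogonal to W, and Pythagoras makes it the projection. *)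

theory Submission
  imports Defs
begin

lemma countable_disjoint_family_enumeration:
  fixes F :: "'a set set"
  assumes "countable F" "disjoint F"
  obtains A :: "nat \<Rightarrow> 'a set"
  where "disjoint_family A" "\<And>n. A n \<in> insert {} F" "(\<Union>n. A n) = \<Union>F"
proof -
  define G where "G = insert {} F"
  define B where "B = from_nat_into G"
  have "countable G" "G \<noteq> {}"
    using assms(1) by (auto simp: G_def)
  then have range_B: "range B = G"
    unfolding B_def by simp
  have disjoint_G: "disjoint G"
    using assms(2) unfolding G_def by (simp add: pairwise_insert)
  have mem: "disjointed B n \<in> G" for n
  proof (cases "\<exists>i<n. B i = B n")
    case True
    then have "disjointed B n = {}"
      unfolding disjointed_def by force
    then show ?thesis by (simp add: G_def)
  next
    case False
    have "B n \<inter> B i = {}" if "i < n" for i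
      using False that disjoint_G range_B by (metis disjnt_def pairwiseD rangeI)
    then have "B n \<inter> (\<Union>i\<in>{0..<n}. B i) = {}"
      by (simp add: Int_UN_distrib)
    then have "disjointed B n = B n"
      unfolding disjointed_def by (rule Diff_triv)
    then show ?thesis using range_B by auto
  qed
  have union: "(\<Union>n. disjointed B n) = \<Union>F"
    by (simp add: UN_disjointed_eq range_B G_def)
  show ?thesis
    by (rule that[OF disjoint_family_disjointed]) (use mem union in \<open>simp_all add: G_def\<close>)
qed

lemma set_integral_disjoint_family_sums:
  fixes f :: "'a \<Rightarrow> real"
  assumes [measurable]: "\<And>n. A n \<in> sets M" and "disjoint_family A"
    and "set_integrable M (\<Union>n. A n) f"
  shows "(\<lambda>n. LINT x:A n|M. f x) sums (LINT x:(\<Union>n. A n)|M. f x)"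
proof -
  have partial: "(\<Sum>i<n. LINT x:A i|M. f x) = (LINT x:(\<Union>i<n. A i)|M. f x)" for n
  proof (rule set_integral_finite_Union[symmetric])
    show "disjoint_family_on A {..<n}"
      using assms(2) disjoint_family_on_mono by blast
    show "set_integrable M (A i) f" for i
      by (rule set_integrable_subset[OF assms(3)]) auto
  qed auto
  have union: "(\<Union>n. \<Union>i<n. A i) = (\<Union>n. A n)"
    by auto
  have "incseq (\<lambda>n. \<Union>i<n. A i)"
    by (force simp: incseq_def)
  then have "(\<lambda>n. LINT x:(\<Union>i<n. A i)|M. f x) \<longlonglongrightarrow> (LINT x:(\<Union>n. \<Union>i<n. A i)|M. f x)"
    by (intro set_integral_cont_up) (use assms(3) union in auto)
  then show ?thesis
    unfolding sums_def partial union .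
qed

lemma set_integral_Union_nonpos:
  fixes f :: "'a \<Rightarrow> real"
  assumes "countable F" "disjoint F" "F \<subseteq> sets M" "set_integrable M (\<Union>F) f"
    and "\<And>S. S \<in> F \<Longrightarrow> (LINT x:S|M. f x) \<le> 0"
  shows "(LINT x:\<Union>F|M. f x) \<le> 0"
proof -
  obtain A :: "nat \<Rightarrow> 'a set" where A: "disjoint_family A" "\<And>n. A n \<in> insert {} F" "(\<Union>n. A n) = \<Union>F"
    using countable_disjoint_family_enumeration[OF assms(1,2)] by blast
  have "A n \<in> sets M" for n
    using A(2)[of n] assms(3) by auto
  then have sums: "(\<lambda>n. LINT x:A n|M. f x) sums (LINT x:\<Union>F|M. f x)"
    using set_integral_disjoint_family_sums[of A M f] A(1,3) assms(4) by simp
  have le: "(LINT x:A n|M. f x) \<le> 0" for n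
    using A(2)[of n] assms(5) by (auto simp: set_lebesgue_integral_def)
  show ?thesis
    using sums_le[OF le sums sums_zero] .
qed

lemma set_integral_Union_eq_0:
  fixes f :: "'a \<Rightarrow> real"
  assumes "countable F" "disjoint F" "F \<subseteq> sets M" "set_integrable M (\<Union>F) f"
    and "\<And>S. S \<in> F \<Longrightarrow> (LINT x:S|M. f x) = 0"
  shows "(LINT x:\<Union>F|M. f x) = 0"
proof -
  have neg: "(LINT x:S|M. - f x) = - (LINT x:S|M. f x)" for S
    by (simp add: set_lebesgue_integral_def)
  have "(LINT x:\<Union>F|M. f x) \<le> 0"
    using set_integral_Union_nonpos[OF assms(1-4)] assms(5) by simp
  moreover have "set_integrable M (\<Union>F) (\<lambda>x. - f x)"
    using set_integrable_mult_right[OF assms(4), of "-1"] by simp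
  then have "(LINT x:\<Union>F|M. - f x) \<le> 0"
    by (rule set_integral_Union_nonpos[OF assms(1-3)])
       (simp add: assms(5) neg)
  ultimately show ?thesis
    by (simp add: neg)
qed

lemma nn_integral_Union_mono:
  assumes "countable F" "disjoint F" "F \<subseteq> sets M"
    and [measurable]: "g \<in> borel_measurable M" "h \<in> borel_measurable M"
    and "\<And>S. S \<in> F \<Longrightarrow> (\<integral>\<^sup>+x\<in>S. g x \<partial>M) \<le> (\<integral>\<^sup>+x\<in>S. h x \<partial>M)"
  shows "(\<integral>\<^sup>+x\<in>\<Union>F. g x \<partial>M) \<le> (\<integral>\<^sup>+x\<in>\<Union>F. h x \<partial>M)"
proof -
  obtain A :: "nat \<Rightarrow> 'a set" where A: "disjoint_family A" "\<And>n. A n \<in> insert {} F" "(\<Union>n. A n) = \<Union>F"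
    using countable_disjoint_family_enumeration[OF assms(1,2)] by blast
  have A_sets: "A n \<in> sets M" for n
    using A(2)[of n] assms(3) by auto
  have "(\<integral>\<^sup>+x\<in>\<Union>F. g x \<partial>M) = (\<Sum>n. \<integral>\<^sup>+x\<in>A n. g x \<partial>M)"
    using nn_integral_disjoint_family[OF _ A_sets A(1)] A(3) by simp
  also have "\<dots> \<le> (\<Sum>n. \<integral>\<^sup>+x\<in>A n. h x \<partial>M)"
  proof (intro suminf_le)
    show "(\<integral>\<^sup>+x\<in>A n. g x \<partial>M) \<le> (\<integral>\<^sup>+x\<in>A n. h x \<partial>M)" for n
      using A(2)[of n] assms(6) by auto
  qed auto
  also have "\<dots> = (\<integral>\<^sup>+x\<in>\<Union>F. h x \<partial>M)"
    using nn_integral_disjoint_family[OF _ A_sets A(1)] A(3) by simp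
  finally show ?thesis .
qed

section \<open>Layer-cake estimates on an interval\<close>

text \<open>The value z rounded down to the grid of mesh 1/(n+1) and truncated at n+1, written with one
  superlevel indicator per grid level.\<close>

definition staircase :: "nat \<Rightarrow> real \<Rightarrow> real" where
  "staircase n z =
     (\<Sum>k\<in>{1..Suc n * Suc n}. indicat_real {real k / real (Suc n)..} z) / real (Suc n)"

lemma borel_measurable_staircase [measurable]: "staircase n \<in> borel_measurable borel"
  unfolding staircase_def by measurable

lemma staircase_eq_floor:
  assumes "0 \<le> z"
  shows "staircase n z = real (min (Suc n * Suc n) (nat \<lfloor>real (Suc n) * z\<rfloor>)) / real (Suc n)"
proof -
  define N where "N = Suc n"
  have level: "indicat_real {real k / real N..} z = indicat_real {k. real k \<le> real N * z} k" for k
    by (simp add: indicator_def N_def divide_le_eq mult.commute)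
  have floor: "k \<le> nat \<lfloor>real N * z\<rfloor> \<longleftrightarrow> real k \<le> real N * z" for k
    using assms by (simp add: le_nat_iff le_floor_iff)
  have "{1..N * N} \<inter> {k. real k \<le> real N * z} = {1..min (N * N) (nat \<lfloor>real N * z\<rfloor>)}"
    by (auto simp only: floor Int_iff mem_Collect_eq atLeastAtMost_iff min.bounded_iff)
  then have "(\<Sum>k\<in>{1..N * N}. indicat_real {k. real k \<le> real N * z} k)
      = real (min (N * N) (nat \<lfloor>real N * z\<rfloor>))"
    by (simp add: indicator_def sum.If_cases)
  then show ?thesis
    unfolding staircase_def level[unfolded N_def] N_def by simp
qed

lemma staircase_bounds:
  assumes "0 \<le> z"
  shows "0 \<le> staircase n z" "staircase n z \<le> z"
    and "z \<le> real (Suc n) \<Longrightarrow> z - 1 / real (Suc n) \<le> staircase n z"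
proof -
  define N where "N = real (Suc n)"
  have N: "N \<ge> 1" by (simp add: N_def)
  have eq: "staircase n z = real (min (Suc n * Suc n) (nat \<lfloor>N * z\<rfloor>)) / N"
    using staircase_eq_floor[OF assms] by (simp add: N_def)
  show "0 \<le> staircase n z"
    unfolding eq using N by simp
  have "real (min (Suc n * Suc n) (nat \<lfloor>N * z\<rfloor>)) \<le> N * z"
    using assms N of_int_floor_le[of "N * z"] by (simp add: of_nat_min min_le_iff_disj)
  then show "staircase n z \<le> z"
    unfolding eq using N by (simp add: divide_le_eq mult.commute)
  assume "z \<le> real (Suc n)"
  then have "\<lfloor>N * z\<rfloor> \<le> int (Suc n * Suc n)"
    using N by (metis N_def floor_mono floor_of_nat mult_left_mono of_nat_mult le_numeral_extra(1)
        order_trans zero_le_one)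
  then have "nat \<lfloor>N * z\<rfloor> \<le> Suc n * Suc n"
    by (simp only: nat_le_iff)
  then have "real (min (Suc n * Suc n) (nat \<lfloor>N * z\<rfloor>)) = of_int \<lfloor>N * z\<rfloor>"
    using assms N by (simp add: min_absorb2)
  then have "N * z - 1 \<le> real (min (Suc n * Suc n) (nat \<lfloor>N * z\<rfloor>))"
    by linarith
  then have "(N * z - 1) / N \<le> staircase n z"
    unfolding eq using N by (simp add: divide_right_mono)
  moreover have "(N * z - 1) / N = z - 1 / real (Suc n)"
    using N by (simp add: N_def field_simps)
  ultimately show "z - 1 / real (Suc n) \<le> staircase n z"
    by simp
qed

lemma tendsto_staircase:
  assumes "0 \<le> z"
  shows "(\<lambda>n. staircase n z) \<longlonglongrightarrow> z"
proof (rule tendsto_sandwich[where f = "\<lambda>n. z - 1 / real (Suc n)" and h = "\<lambda>_. z"])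
  obtain n0 :: nat where "z \<le> real n0"
    using real_arch_simple by blast
  then have "\<forall>n\<ge>n0. z - 1 / real (Suc n) \<le> staircase n z"
    using staircase_bounds(3)[OF assms] by (meson le_SucI of_nat_le_iff order_trans)
  then show "\<forall>\<^sub>F n in sequentially. z - 1 / real (Suc n) \<le> staircase n z"
    by (auto simp: eventually_sequentially)
  show "\<forall>\<^sub>F n in sequentially. staircase n z \<le> z"
    using staircase_bounds(2)[OF assms] by simp
  show "(\<lambda>n. z - 1 / real (Suc n)) \<longlonglongrightarrow> z"
    using tendsto_diff[OF tendsto_const LIMSEQ_Suc[OF lim_const_over_n[of 1]]] by simp
qed simp

lemma set_integral_mult_staircase_nonpos:
  fixes W Z :: "'a \<Rightarrow> real"
  assumes [measurable]: "I \<in> sets M" "Z \<in> borel_measurable M"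
    and W_int: "set_integrable M I W"
    and superlevel: "\<And>s. 0 < s \<Longrightarrow> (LINT x:{x \<in> I. s \<le> Z x}|M. W x) \<le> 0"
  shows "(LINT x:I|M. W x * staircase n (Z x)) \<le> 0"
proof -
  define A where "A k = {x \<in> I. real k / real (Suc n) \<le> Z x}" for k :: nat
  have A_sets [measurable]: "A k \<in> sets M" for k
    unfolding A_def by measurable
  have A_int: "integrable M (\<lambda>x. indicat_real (A k) x * W x)" for k
    using set_integrable_subset[OF W_int A_sets] unfolding set_integrable_def
    by (auto simp: A_def)
  have pointwise: "indicat_real I x * (W x * staircase n (Z x))
      = (\<Sum>k\<in>{1..Suc n * Suc n}. indicat_real (A k) x * W x) / real (Suc n)" for x
    unfolding staircase_def A_def
    by (cases "x \<in> I") (simp_all add: indicator_def sum_distrib_right[symmetric] distrib_left mult_ac)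
  have level: "(LINT x|M. indicat_real (A k) x * W x) \<le> 0" if "k \<in> {1..Suc n * Suc n}" for k
    using superlevel[of "real k / real (Suc n)"] that
    by (simp add: A_def set_lebesgue_integral_def)
  have "(LINT x:I|M. W x * staircase n (Z x))
      = (LINT x|M. (\<Sum>k\<in>{1..Suc n * Suc n}. indicat_real (A k) x * W x)) / real (Suc n)"
    unfolding set_lebesgue_integral_def real_scaleR_def pointwise by (rule integral_divide_zero)
  also have "\<dots> = (\<Sum>k\<in>{1..Suc n * Suc n}. LINT x|M. indicat_real (A k) x * W x) / real (Suc n)"
    by (subst Bochner_Integration.integral_sum) (use A_int in auto)
  also have "\<dots> \<le> 0"
    by (intro divide_nonpos_pos sum_nonpos level) simp_all
  finally show ?thesis .
qed

lemma set_integral_mult_nonpos_of_superlevel_sets: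
  fixes W Z :: "'a \<Rightarrow> real"
  assumes [measurable]: "I \<in> sets M" "Z \<in> borel_measurable M"
    and W_int: "set_integrable M I W" and WZ_int: "set_integrable M I (\<lambda>x. W x * Z x)"
    and Z_nonneg: "\<And>x. x \<in> I \<Longrightarrow> 0 \<le> Z x"
    and superlevel: "\<And>s. 0 < s \<Longrightarrow> (LINT x:{x \<in> I. s \<le> Z x}|M. W x) \<le> 0"
  shows "(LINT x:I|M. W x * Z x) \<le> 0"
proof -
  have W_meas: "(\<lambda>x. indicat_real I x * W x) \<in> borel_measurable M"
    using W_int unfolding set_integrable_def by (simp add: borel_measurable_integrable)
  have "(\<lambda>n. LINT x|M. indicat_real I x * (W x * staircase n (Z x)))
      \<longlonglongrightarrow> (LINT x|M. indicat_real I x * (W x * Z x))"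
  proof (rule integral_dominated_convergence[where w = "\<lambda>x. \<bar>indicat_real I x * (W x * Z x)\<bar>"])
    show "(\<lambda>x. indicat_real I x * (W x * Z x)) \<in> borel_measurable M"
      "(\<lambda>x. indicat_real I x * (W x * staircase n (Z x))) \<in> borel_measurable M" for n
      using W_meas by (simp_all add: mult.assoc[symmetric])
    show "integrable M (\<lambda>x. \<bar>indicat_real I x * (W x * Z x)\<bar>)"
      using WZ_int unfolding set_integrable_def by (simp add: integrable_abs)
    show "AE x in M. (\<lambda>n. indicat_real I x * (W x * staircase n (Z x)))
        \<longlonglongrightarrow> indicat_real I x * (W x * Z x)"
    proof (intro AE_I2)
      fix x
      show "(\<lambda>n. indicat_real I x * (W x * staircase n (Z x))) \<longlonglongrightarrow> indicat_real I x * (W x * Z x)"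
        by (cases "x \<in> I") (auto intro!: tendsto_intros tendsto_staircase Z_nonneg)
    qed
    show "AE x in M. norm (indicat_real I x * (W x * staircase n (Z x)))
        \<le> \<bar>indicat_real I x * (W x * Z x)\<bar>" for n
    proof (intro AE_I2)
      fix x
      show "norm (indicat_real I x * (W x * staircase n (Z x))) \<le> \<bar>indicat_real I x * (W x * Z x)\<bar>"
      proof (cases "x \<in> I")
        case True
        then have "\<bar>staircase n (Z x)\<bar> \<le> \<bar>Z x\<bar>"
          using staircase_bounds(1,2)[OF Z_nonneg[OF True], of n] by linarith
        then show ?thesis
          using True by (simp add: abs_mult mult_left_mono)
      qed simp
    qed
  qed
  then show ?thesis
    using LIMSEQ_le_const2 set_integral_mult_staircase_nonpos[OF assms(1,2) W_int superlevel]
    unfolding set_lebesgue_integral_def by fastforce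
qed

lemma AE_lebesgue_neq: "AE x in lebesgue. x \<noteq> (c::real)"
  by (rule AE_completion[OF AE_lborel_singleton])

lemma set_integrable_imp_set_borel_measurable:
  "set_integrable M A f \<Longrightarrow> set_borel_measurable M A f"
  unfolding set_integrable_def set_borel_measurable_def by (rule borel_measurable_integrable)

lemma set_integral_cong_except_point:
  fixes f :: "real \<Rightarrow> real"
  assumes "set_borel_measurable lebesgue A f" "set_borel_measurable lebesgue B f"
    and "A - {c} = B - {c}"
  shows "(LINT x:A|lebesgue. f x) = (LINT x:B|lebesgue. f x)"
proof (rule set_integral_cong_set[OF assms(2,1)])
  show "AE x in lebesgue. (x \<in> B) = (x \<in> A)"
    using AE_lebesgue_neq[of c] by eventually_elim (use assms(3) in blast)
qed

lemma set_integral_down_closed_nonneg: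
  fixes W :: "real \<Rightarrow> real"
  assumes W_int: "set_integrable lebesgue {a<..<b} W"
    and partial: "\<And>t. a < t \<Longrightarrow> t \<le> b \<Longrightarrow> 0 \<le> (LINT x:{a<..<t}|lebesgue. W x)"
    and S: "S \<subseteq> {a<..<b}" "S \<in> sets lebesgue"
    and down: "\<And>x y. x \<in> S \<Longrightarrow> a < y \<Longrightarrow> y \<le> x \<Longrightarrow> y \<in> S"
  shows "0 \<le> (LINT x:S|lebesgue. W x)"
proof (cases "S = {}")
  case False
  define s where "s = Sup S"
  have bdd: "bdd_above S"
    using S(1) by (intro bdd_aboveI[of _ b]) auto
  have le_s: "x \<le> s" if "x \<in> S" for x
    unfolding s_def using that bdd by (simp add: cSup_upper)
  have s_le: "s \<le> b"
    unfolding s_def using False S(1) by (intro cSup_least) auto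
  have a_s: "a < s"
    using False S(1) le_s by force
  have "y \<in> S" if "a < y" "y < s" for y
  proof -
    obtain x where "x \<in> S" "y < x"
      using \<open>y < s\<close> False unfolding s_def by (meson less_cSupD)
    then show ?thesis using down that by simp
  qed
  then have "S - {s} = {a<..<s} - {s}"
    using S(1) le_s by force
  then have "(LINT x:S|lebesgue. W x) = (LINT x:{a<..<s}|lebesgue. W x)"
    using S s_le
    by (intro set_integral_cong_except_point set_integrable_imp_set_borel_measurable
        set_integrable_subset[OF W_int]) auto
  then show ?thesis
    using partial[OF a_s s_le] by simp
qed (simp add: set_lebesgue_integral_def)

lemma set_integral_up_closed_nonpos:
  fixes W :: "real \<Rightarrow> real"
  assumes W_int: "set_integrable lebesgue {a<..<b} W"
    and partial: "\<And>t. a < t \<Longrightarrow> t \<le> b \<Longrightarrow> 0 \<le> (LINT x:{a<..<t}|lebesgue. W x)"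
    and total: "(LINT x:{a<..<b}|lebesgue. W x) = 0"
    and S: "S \<subseteq> {a<..<b}" "S \<in> sets lebesgue"
    and up: "\<And>x y. x \<in> S \<Longrightarrow> x \<le> y \<Longrightarrow> y < b \<Longrightarrow> y \<in> S"
  shows "(LINT x:S|lebesgue. W x) \<le> 0"
proof -
  define T where "T = {a<..<b} - S"
  have T: "T \<subseteq> {a<..<b}" "T \<in> sets lebesgue"
    using S(2) by (auto simp: T_def)
  have "0 \<le> (LINT x:T|lebesgue. W x)"
  proof (rule set_integral_down_closed_nonneg[OF W_int partial T])
    show "y \<in> T" if "x \<in> T" "a < y" "y \<le> x" for x y
      using that up[of y x] by (auto simp: T_def)
  qed
  moreover have "(LINT x:{a<..<b}|lebesgue. W x) = (LINT x:S|lebesgue. W x) + (LINT x:T|lebesgue. W x)"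
  proof -
    have "{a<..<b} = S \<union> T" "S \<inter> T = {}"
      using S(1) by (auto simp: T_def)
    then show ?thesis
      using set_integral_Un[OF _ set_integrable_subset[OF W_int S(2,1)] set_integrable_subset[OF W_int T(2,1)]]
      by simp
  qed
  ultimately show ?thesis
    using total by simp
qed

lemma mono_on_set_borel_measurable:
  fixes Y :: "real \<Rightarrow> real"
  assumes "mono_on A Y" "A \<in> sets borel"
  shows "set_borel_measurable lebesgue A Y"
  using borel_measurable_mono_on_fnc[OF assms(1)] assms(2)
  unfolding set_borel_measurable_def
  by (subst (asm) borel_measurable_restrict_space_iff) (auto intro: measurable_completion)

lemma set_integral_mult_nondecreasing_nonpos:
  fixes W Z :: "real \<Rightarrow> real"
  assumes W_int: "set_integrable lebesgue {a<..<b} W"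
    and partial: "\<And>t. a < t \<Longrightarrow> t \<le> b \<Longrightarrow> 0 \<le> (LINT x:{a<..<t}|lebesgue. W x)"
    and total: "(LINT x:{a<..<b}|lebesgue. W x) = 0"
    and [measurable]: "Z \<in> borel_measurable lebesgue"
    and Z_nonneg: "\<And>x. x \<in> {a<..<b} \<Longrightarrow> 0 \<le> Z x" and Z_mono: "mono_on {a<..<b} Z"
    and WZ_int: "set_integrable lebesgue {a<..<b} (\<lambda>x. W x * Z x)"
  shows "(LINT x:{a<..<b}|lebesgue. W x * Z x) \<le> 0"
proof (rule set_integral_mult_nonpos_of_superlevel_sets[OF _ _ W_int WZ_int Z_nonneg])
  show "(LINT x:{x \<in> {a<..<b}. s \<le> Z x}|lebesgue. W x) \<le> 0" for s
  proof (rule set_integral_up_closed_nonpos[OF W_int partial total])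
    have [measurable]: "{a<..<b} \<in> sets lebesgue"
      by simp
    show "{x \<in> {a<..<b}. s \<le> Z x} \<in> sets lebesgue"
      by measurable
    show "y \<in> {x \<in> {a<..<b}. s \<le> Z x}" if "x \<in> {x \<in> {a<..<b}. s \<le> Z x}" "x \<le> y" "y < b" for x y
      using that mono_onD[OF Z_mono, of x y] by auto
  qed auto
qed simp_all

lemma set_integral_mult_nonincreasing_nonneg:
  fixes W Z :: "real \<Rightarrow> real"
  assumes W_int: "set_integrable lebesgue {a<..<b} W"
    and partial: "\<And>t. a < t \<Longrightarrow> t \<le> b \<Longrightarrow> 0 \<le> (LINT x:{a<..<t}|lebesgue. W x)"
    and [measurable]: "Z \<in> borel_measurable lebesgue"
    and Z_nonneg: "\<And>x. x \<in> {a<..<b} \<Longrightarrow> 0 \<le> Z x" and Z_antimono: "antimono_on {a<..<b} Z"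
    and WZ_int: "set_integrable lebesgue {a<..<b} (\<lambda>x. W x * Z x)"
  shows "0 \<le> (LINT x:{a<..<b}|lebesgue. W x * Z x)"
proof -
  have "(LINT x:{a<..<b}|lebesgue. - W x * Z x) \<le> 0"
  proof (rule set_integral_mult_nonpos_of_superlevel_sets[OF _ _ _ _ Z_nonneg])
    show "(LINT x:{x \<in> {a<..<b}. s \<le> Z x}|lebesgue. - W x) \<le> 0" for s
    proof -
      have "0 \<le> (LINT x:{x \<in> {a<..<b}. s \<le> Z x}|lebesgue. W x)"
      proof (rule set_integral_down_closed_nonneg[OF W_int partial])
        have [measurable]: "{a<..<b} \<in> sets lebesgue"
          by simp
        show "{x \<in> {a<..<b}. s \<le> Z x} \<in> sets lebesgue"
          by measurable
        show "y \<in> {x \<in> {a<..<b}. s \<le> Z x}" if "x \<in> {x \<in> {a<..<b}. s \<le> Z x}" "a < y" "y \<le> x" for x y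
          using that monotone_onD[OF Z_antimono, of y x] by auto
      qed auto
      then show ?thesis
        by (simp add: set_lebesgue_integral_def)
    qed
  qed (use set_integrable_mult_right[OF W_int, of "-1"] set_integrable_mult_right[OF WZ_int, of "-1"]
      in simp_all)
  then show ?thesis
    by (simp add: set_lebesgue_integral_def)
qed

text \<open>A second-mean-value inequality: the positive and negative parts of Y have superlevel sets
  that are final, respectively initial, segments of (a,b).\<close>

lemma set_integral_mult_mono_nonpos:
  fixes W Y :: "real \<Rightarrow> real"
  assumes W_int: "set_integrable lebesgue {a<..<b} W"
    and partial: "\<And>t. t \<in> {a<..<b} \<Longrightarrow> 0 \<le> (LINT x:{a<..<t}|lebesgue. W x)"
    and total: "(LINT x:{a<..<b}|lebesgue. W x) = 0"
    and Y_mono: "mono_on {a<..<b} Y"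
    and WY_int: "set_integrable lebesgue {a<..<b} (\<lambda>x. W x * Y x)"
  shows "(LINT x:{a<..<b}|lebesgue. W x * Y x) \<le> 0"
proof -
  define I where "I = {a<..<b}"
  have partial': "0 \<le> (LINT x:{a<..<t}|lebesgue. W x)" if "a < t" "t \<le> b" for t
    using partial[of t] total that by (cases "t = b") auto
  have [measurable]: "(\<lambda>x. indicat_real I x * Y x) \<in> borel_measurable lebesgue"
    using mono_on_set_borel_measurable[OF Y_mono] unfolding set_borel_measurable_def I_def by simp
  define Zp where "Zp x = max (indicat_real I x * Y x) 0" for x
  define Zm where "Zm x = max (- (indicat_real I x * Y x)) 0" for x
  have Zp_meas [measurable]: "Zp \<in> borel_measurable lebesgue"
    and Zm_meas [measurable]: "Zm \<in> borel_measurable lebesgue"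
    unfolding Zp_def Zm_def by measurable
  have bounded_int: "set_integrable lebesgue I (\<lambda>x. W x * Z x)"
    if [measurable]: "Z \<in> borel_measurable lebesgue" and "\<And>x. x \<in> I \<Longrightarrow> \<bar>Z x\<bar> \<le> \<bar>Y x\<bar>" for Z
  proof (rule set_integrable_bound[OF WY_int[folded I_def]])
    show "set_borel_measurable lebesgue I (\<lambda>x. W x * Z x)"
      using set_integrable_imp_set_borel_measurable[OF W_int[folded I_def]]
      unfolding set_borel_measurable_def by (simp add: mult.assoc[symmetric])
    show "AE x in lebesgue. x \<in> I \<longrightarrow> norm (W x * Z x) \<le> norm (W x * Y x)"
      using that(2) by (intro AE_I2) (simp add: abs_mult mult_left_mono)
  qed
  have WZp_int: "set_integrable lebesgue I (\<lambda>x. W x * Zp x)"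
    by (rule bounded_int) (auto simp: Zp_def)
  have WZm_int: "set_integrable lebesgue I (\<lambda>x. W x * Zm x)"
    by (rule bounded_int) (auto simp: Zm_def)
  have "(LINT x:I|lebesgue. W x * Zp x) \<le> 0"
    unfolding I_def
  proof (rule set_integral_mult_nondecreasing_nonpos[OF W_int partial' total Zp_meas])
    show "mono_on {a<..<b} Zp"
    proof (rule mono_onI)
      fix r s assume "r \<in> {a<..<b}" "s \<in> {a<..<b}" "r \<le> s"
      then show "Zp r \<le> Zp s"
        using mono_onD[OF Y_mono, of r s] by (simp add: Zp_def I_def max.mono)
    qed
  qed (use WZp_int in \<open>auto simp: Zp_def I_def\<close>)
  moreover have "0 \<le> (LINT x:I|lebesgue. W x * Zm x)"
    unfolding I_def
  proof (rule set_integral_mult_nonincreasing_nonneg[OF W_int partial' Zm_meas])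
    show "antimono_on {a<..<b} Zm"
    proof (rule monotone_onI)
      fix r s assume "r \<in> {a<..<b}" "s \<in> {a<..<b}" "r \<le> s"
      then show "Zm s \<le> Zm r"
        using mono_onD[OF Y_mono, of r s] by (simp add: Zm_def I_def max.mono)
    qed
  qed (use WZm_int in \<open>auto simp: Zm_def I_def\<close>)
  moreover have "(LINT x:I|lebesgue. W x * Y x)
      = (LINT x:I|lebesgue. W x * Zp x) - (LINT x:I|lebesgue. W x * Zm x)"
  proof -
    have "(LINT x:I|lebesgue. W x * Y x) = (LINT x:I|lebesgue. W x * Zp x - W x * Zm x)"
      by (rule set_lebesgue_integral_cong) (auto simp: Zp_def Zm_def I_def max_def algebra_simps)
    then show ?thesis
      using set_integral_diff(2)[OF WZp_int WZm_int] by simp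
  qed
  ultimately show ?thesis
    by (simp add: I_def)
qed

section \<open>Functions with vanishing tail integrals\<close>

lemma emeasure_density_max_0:
  fixes g :: "real \<Rightarrow> real"
  assumes g_int: "integrable lborel g" and [measurable]: "A \<in> sets borel"
  shows "emeasure (density lborel (\<lambda>x. ennreal (max (g x) 0))) A
    = ennreal (LINT x:A|lborel. max (g x) 0)"
proof -
  have [measurable]: "g \<in> borel_measurable borel"
    using borel_measurable_integrable[OF g_int] by simp
  have "emeasure (density lborel (\<lambda>x. ennreal (max (g x) 0))) A
      = (\<integral>\<^sup>+x. ennreal (indicat_real A x *\<^sub>R max (g x) 0) \<partial>lborel)"
    by (subst emeasure_density) (auto intro!: nn_integral_cong simp: indicator_def)
  also have "\<dots> = ennreal (LINT x:A|lborel. max (g x) 0)"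
    unfolding set_lebesgue_integral_def using g_int
    by (intro nn_integral_eq_integral integrable_mult_indicator integrable_max) auto
  finally show ?thesis .
qed

lemma AE_lborel_zero_if_tail_integrals_zero:
  fixes g :: "real \<Rightarrow> real"
  assumes g_int: "integrable lborel g" and tails: "\<And>t. (LINT x:{t<..}|lborel. g x) = 0"
  shows "AE x in lborel. g x = 0"
proof -
  have [measurable]: "g \<in> borel_measurable borel"
    using borel_measurable_integrable[OF g_int] by simp
  define gp where "gp = (\<lambda>x. ennreal (max (g x) 0))"
  define gn where "gn = (\<lambda>x. ennreal (max (- g x) 0))"
  have neg_int: "integrable lborel (\<lambda>x. - g x)"
    using g_int by simp
  have parts_eq: "(LINT x:{t<..}|lborel. max (g x) 0) = (LINT x:{t<..}|lborel. max (- g x) 0)" for t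
  proof -
    have "(LINT x:{t<..}|lborel. g x) = (LINT x:{t<..}|lborel. max (g x) 0 - max (- g x) 0)"
      by (rule set_lebesgue_integral_cong) (auto simp: max_def)
    also have "\<dots> = (LINT x:{t<..}|lborel. max (g x) 0) - (LINT x:{t<..}|lborel. max (- g x) 0)"
    proof -
      have "set_integrable lborel {t<..} (\<lambda>x. max (c * g x) 0)" for c
        unfolding set_integrable_def using g_int
        by (intro integrable_mult_indicator integrable_max) auto
      from set_integral_diff(2)[OF this[of 1] this[of "-1"]] show ?thesis
        by simp
    qed
    finally show ?thesis
      using tails[of t] by simp
  qed
  have "density lborel gp = density lborel gn"
  proof (rule measure_eqI_lessThan)
    show "emeasure (density lborel gp) {x<..} < \<infinity>" for x
      using emeasure_density_max_0[OF g_int] by (simp add: gp_def)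
    show "emeasure (density lborel gp) {x<..} = emeasure (density lborel gn) {x<..}" for x
      using emeasure_density_max_0[OF g_int] emeasure_density_max_0[OF neg_int] parts_eq[of x]
      by (simp add: gp_def gn_def)
  qed simp_all
  moreover have "gp \<in> borel_measurable lborel" "gn \<in> borel_measurable lborel"
    unfolding gp_def gn_def by simp_all
  ultimately have "AE x in lborel. gp x = gn x"
    using sigma_finite_measure.density_unique_iff[OF sigma_finite_lborel] by blast
  then show ?thesis
    by eventually_elim (auto simp: gp_def gn_def max_def split: if_splits)
qed

lemma AE_lebesgue_zero_if_tail_integrals_zero:
  fixes V :: "real \<Rightarrow> real"
  assumes V_int: "integrable lebesgue V" and tails: "\<And>t. (LINT x:{t<..}|lebesgue. V x) = 0"
  shows "AE x in lebesgue. V x = 0"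
proof -
  obtain g where g: "g \<in> borel_measurable lborel" and V_eq_g: "AE x in lborel. V x = g x"
    using completion_ex_borel_measurable_real[of V lborel] borel_measurable_integrable[OF V_int]
    by auto
  have [measurable]: "g \<in> borel_measurable borel"
    using g by simp
  have g_meas: "g \<in> borel_measurable lebesgue" and V_meas: "V \<in> borel_measurable lebesgue"
    using measurable_completion[OF g] borel_measurable_integrable[OF V_int] by simp_all
  have V_eq_g': "AE x in lebesgue. V x = g x"
    using AE_completion[OF V_eq_g] .
  have g_int: "integrable lborel g"
    using integrable_cong_AE[OF borel_measurable_integrable[OF V_int] measurable_completion[OF g] V_eq_g']
      V_int integrable_completion[OF g] by simp
  have "AE x in lborel. g x = 0"
  proof (rule AE_lborel_zero_if_tail_integrals_zero[OF g_int])
    fix t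
    have "(LINT x:{t<..}|lborel. g x) = (LINT x:{t<..}|lebesgue. g x)"
      unfolding set_lebesgue_integral_def by (rule integral_completion[symmetric]) simp
    also have "\<dots> = (LINT x:{t<..}|lebesgue. V x)"
      unfolding set_lebesgue_integral_def
    proof (rule integral_cong_AE)
      show "AE x in lebesgue. indicat_real {t<..} x *\<^sub>R g x = indicat_real {t<..} x *\<^sub>R V x"
        using V_eq_g' by eventually_elim simp
    qed (use g_meas V_meas in \<open>auto intro!: borel_measurable_times borel_measurable_indicator\<close>)
    finally show "(LINT x:{t<..}|lborel. g x) = 0"
      using tails by simp
  qed
  then show ?thesis
    using AE_completion V_eq_g' by fastforce
qed

lemma Om_sets [measurable]: "Om \<in> sets lebesgue"
  unfolding Om_def by simp

lemma integrable_indicator_Om: "integrable lebesgue (indicat_real Om)"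
  unfolding Om_def using lmeasurable_iff_integrable by blast

lemma L2D:
  assumes "f \<in> L2"
  shows "(\<lambda>x. indicat_real Om x * f x) \<in> borel_measurable lebesgue"
    and "integrable lebesgue (\<lambda>x. indicat_real Om x * (f x)\<^sup>2)"
  using assms unfolding L2_def set_borel_measurable_def set_integrable_def by auto

lemma L2I:
  assumes "(\<lambda>x. indicat_real Om x * f x) \<in> borel_measurable lebesgue"
    and "integrable lebesgue (\<lambda>x. indicat_real Om x * (f x)\<^sup>2)"
  shows "f \<in> L2"
  using assms unfolding L2_def set_borel_measurable_def set_integrable_def by auto

lemma set_integrable_mult_L2:
  assumes "f \<in> L2" "g \<in> L2"
  shows "set_integrable lebesgue Om (\<lambda>x. f x * g x)"
  unfolding set_integrable_def
proof (rule Bochner_Integration.integrable_bound)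
  show "integrable lebesgue (\<lambda>x. indicat_real Om x * (f x)\<^sup>2 + indicat_real Om x * (g x)\<^sup>2)"
    using L2D(2)[OF assms(1)] L2D(2)[OF assms(2)] by simp
  have "(\<lambda>x. (indicat_real Om x * f x) * (indicat_real Om x * g x)) \<in> borel_measurable lebesgue"
    using L2D(1)[OF assms(1)] L2D(1)[OF assms(2)] by simp
  moreover have "(\<lambda>x. (indicat_real Om x * f x) * (indicat_real Om x * g x))
      = (\<lambda>x. indicat_real Om x *\<^sub>R (f x * g x))"
    by (auto simp: indicator_def fun_eq_iff)
  ultimately show "(\<lambda>x. indicat_real Om x *\<^sub>R (f x * g x)) \<in> borel_measurable lebesgue"
    by simp
  have "\<bar>f x * g x\<bar> \<le> (f x)\<^sup>2 + (g x)\<^sup>2" for x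
  proof -
    have "0 \<le> (\<bar>f x\<bar> - \<bar>g x\<bar>)\<^sup>2" by simp
    then have "2 * (\<bar>f x\<bar> * \<bar>g x\<bar>) \<le> (f x)\<^sup>2 + (g x)\<^sup>2"
      by (simp add: power2_eq_square algebra_simps)
    then show ?thesis
      unfolding abs_mult using mult_nonneg_nonneg[OF abs_ge_zero abs_ge_zero, of "f x" "g x"]
      by linarith
  qed
  then show "AE x in lebesgue. norm (indicat_real Om x *\<^sub>R (f x * g x))
      \<le> norm (indicat_real Om x * (f x)\<^sup>2 + indicat_real Om x * (g x)\<^sup>2)"
    by (intro AE_I2) (auto simp: indicator_def)
qed

lemma L2_const: "(\<lambda>x. c) \<in> L2"
  by (rule L2I) (use integrable_indicator_Om in simp_all)

lemma set_integrable_L2: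
  assumes "f \<in> L2" "A \<in> sets lebesgue" "A \<subseteq> Om"
  shows "set_integrable lebesgue A f"
  using set_integrable_subset[OF set_integrable_mult_L2[OF assms(1) L2_const[of 1]]] assms(2,3)
  by simp

lemma L2_add:
  assumes "f \<in> L2" "g \<in> L2"
  shows "(\<lambda>x. f x + g x) \<in> L2"
proof (rule L2I)
  show "(\<lambda>x. indicat_real Om x * (f x + g x)) \<in> borel_measurable lebesgue"
    using L2D(1)[OF assms(1)] L2D(1)[OF assms(2)] by (simp add: distrib_left)
  have "integrable lebesgue (\<lambda>x. indicat_real Om x * (f x)\<^sup>2 + indicat_real Om x * (g x)\<^sup>2
      + 2 * (indicat_real Om x * (f x * g x)))"
    using L2D(2)[OF assms(1)] L2D(2)[OF assms(2)] set_integrable_mult_L2[OF assms]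
    unfolding set_integrable_def by simp
  then show "integrable lebesgue (\<lambda>x. indicat_real Om x * (f x + g x)\<^sup>2)"
    by (simp add: power2_eq_square algebra_simps)
qed

lemma L2_cmult:
  assumes "f \<in> L2"
  shows "(\<lambda>x. c * f x) \<in> L2"
proof (rule L2I)
  show "(\<lambda>x. indicat_real Om x * (c * f x)) \<in> borel_measurable lebesgue"
    using borel_measurable_times[OF borel_measurable_const[of c] L2D(1)[OF assms]]
    by (simp add: mult.left_commute)
  show "integrable lebesgue (\<lambda>x. indicat_real Om x * (c * f x)\<^sup>2)"
    using integrable_mult_right[OF L2D(2)[OF assms], of "c\<^sup>2"]
    by (simp add: power_mult_distrib mult_ac)
qed

lemma L2_diff:
  assumes "f \<in> L2" "g \<in> L2"
  shows "(\<lambda>x. f x - g x) \<in> L2"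
  using L2_add[OF assms(1) L2_cmult[OF assms(2), of "-1"]] by simp

lemma measurable_indicator_Om_square:
  assumes "(\<lambda>x. indicat_real Om x * f x) \<in> borel_measurable lebesgue"
  shows "(\<lambda>x. indicat_real Om x * (f x)\<^sup>2) \<in> borel_measurable lebesgue"
proof -
  have "(\<lambda>x. (indicat_real Om x * f x)\<^sup>2) \<in> borel_measurable lebesgue"
    using assms by simp
  moreover have "(\<lambda>x. (indicat_real Om x * f x)\<^sup>2) = (\<lambda>x. indicat_real Om x * (f x)\<^sup>2)"
    by (auto simp: fun_eq_iff indicator_def)
  ultimately show ?thesis
    by simp
qed

lemma L2_bounded:
  assumes "(\<lambda>x. indicat_real Om x * f x) \<in> borel_measurable lebesgue"
    and "\<And>x. x \<in> Om \<Longrightarrow> \<bar>f x\<bar> \<le> B"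
  shows "f \<in> L2"
proof (rule L2I[OF assms(1)])
  have "(f x)\<^sup>2 \<le> B\<^sup>2" if "x \<in> Om" for x
    using assms(2)[OF that] by (metis abs_ge_zero abs_le_square_iff abs_of_nonneg order_trans)
  then have "AE x in lebesgue. norm (indicat_real Om x * (f x)\<^sup>2) \<le> norm (indicat_real Om x * B\<^sup>2)"
    by (intro AE_I2) (auto simp: indicator_def)
  moreover have "integrable lebesgue (\<lambda>x. indicat_real Om x * B\<^sup>2)"
    using integrable_indicator_Om by simp
  ultimately show "integrable lebesgue (\<lambda>x. indicat_real Om x * (f x)\<^sup>2)"
    using Bochner_Integration.integrable_bound measurable_indicator_Om_square[OF assms(1)] by blast
qed

lemma L2_indicator: "A \<in> sets lebesgue \<Longrightarrow> indicat_real A \<in> L2"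
  by (rule L2_bounded[where B = 1]) (auto simp: indicator_def)

lemma L2_comp_bounded:
  assumes "X \<in> L2" and [measurable]: "q \<in> borel_measurable borel" and "\<And>v. \<bar>q v\<bar> \<le> B"
  shows "(\<lambda>x. q (X x)) \<in> L2"
proof (rule L2_bounded[where B = B])
  have [measurable]: "(\<lambda>x. indicat_real Om x * X x) \<in> borel_measurable lebesgue"
    using L2D(1)[OF assms(1)] .
  have "(\<lambda>x. indicat_real Om x * q (indicat_real Om x * X x)) \<in> borel_measurable lebesgue"
    by measurable
  moreover have "(\<lambda>x. indicat_real Om x * q (indicat_real Om x * X x))
      = (\<lambda>x. indicat_real Om x * q (X x))"
    by (auto simp: fun_eq_iff indicator_def)
  ultimately show "(\<lambda>x. indicat_real Om x * q (X x)) \<in> borel_measurable lebesgue"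
    by simp
qed (use assms(3) in auto)

lemma ip_commute: "ip f g = ip g f"
  unfolding ip_def by (simp add: mult.commute)

lemma ip_cmult_left: "ip (\<lambda>x. c * f x) h = c * ip f h"
  unfolding ip_def by (simp add: mult.assoc)

lemma ip_add_left:
  assumes "f \<in> L2" "g \<in> L2" "h \<in> L2"
  shows "ip (\<lambda>x. f x + g x) h = ip f h + ip g h"
  unfolding ip_def
  using set_integral_add(2)[OF set_integrable_mult_L2[OF assms(1,3)] set_integrable_mult_L2[OF assms(2,3)]]
  by (simp add: distrib_right)

lemma ip_diff_left:
  assumes "f \<in> L2" "g \<in> L2" "h \<in> L2"
  shows "ip (\<lambda>x. f x - g x) h = ip f h - ip g h"
  unfolding ip_def
  using set_integral_diff(2)[OF set_integrable_mult_L2[OF assms(1,3)] set_integrable_mult_L2[OF assms(2,3)]]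
  by (simp add: left_diff_distrib)

lemma ip_cmult_right: "ip f (\<lambda>x. c * h x) = c * ip f h"
  using ip_cmult_left[of c h f] by (simp add: ip_commute)

lemma ip_diff_right:
  assumes "f \<in> L2" "g \<in> L2" "h \<in> L2"
  shows "ip h (\<lambda>x. f x - g x) = ip h f - ip h g"
  using ip_diff_left[OF assms] by (simp add: ip_commute)

lemma ip_add_self:
  assumes f: "f \<in> L2" and g: "g \<in> L2"
  shows "ip (\<lambda>x. f x + g x) (\<lambda>x. f x + g x) = ip f f + 2 * ip f g + ip g g"
proof -
  have add: "ip (\<lambda>x. f x + g x) h = ip f h + ip g h" if "h \<in> L2" for h
    by (rule ip_add_left[OF f g that])
  have "ip (\<lambda>x. f x + g x) (\<lambda>x. f x + g x) = ip f (\<lambda>x. f x + g x) + ip g (\<lambda>x. f x + g x)"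
    by (rule add[OF L2_add[OF f g]])
  also have "ip f (\<lambda>x. f x + g x) = ip f f + ip f g"
    using add[OF f] ip_commute[of f "\<lambda>x. f x + g x"] ip_commute[of g f] by simp
  also have "ip g (\<lambda>x. f x + g x) = ip f g + ip g g"
    using add[OF g] ip_commute[of g "\<lambda>x. f x + g x"] by simp
  finally show ?thesis
    by simp
qed

lemma ip_self_nonneg: "0 \<le> ip f f"
  unfolding ip_def set_lebesgue_integral_def
  by (intro Bochner_Integration.integral_nonneg) (simp add: indicator_def)

lemma ip_cong: "(\<And>x. x \<in> Om \<Longrightarrow> g x = g' x) \<Longrightarrow> ip f g = ip f g'"
  unfolding ip_def by (rule set_lebesgue_integral_cong) auto

lemma ip_indicator:
  assumes "A \<in> sets lebesgue" "A \<subseteq> Om"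
  shows "ip f (indicat_real A) = (LINT x:A|lebesgue. f x)"
proof -
  have "(\<lambda>x. indicat_real Om x *\<^sub>R (f x * indicat_real A x)) = (\<lambda>x. indicat_real A x *\<^sub>R f x)"
    using assms(2) by (auto simp: fun_eq_iff indicator_def)
  then show ?thesis unfolding ip_def set_lebesgue_integral_def by simp
qed

section \<open>Maximal intervals of Omega_X\<close>

lemma OmX_subset_Om: "OmX X \<subseteq> Om"
  unfolding OmX_def by auto

lemma open_OmX: "open (OmX X)"
  unfolding open_contains_ball
proof
  fix m assume "m \<in> OmX X"
  then obtain e where e: "e > 0" "ball m e \<subseteq> Om" "\<forall>y\<in>ball m e. X y = X m"
    unfolding OmX_def by auto
  have "y \<in> OmX X" if y: "y \<in> ball m e" for y
  proof -
    have sub: "ball y (e - dist m y) \<subseteq> ball m e"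
      by (simp add: ball_subset_ball_iff dist_commute)
    show ?thesis
      unfolding OmX_def
    proof (intro CollectI conjI exI[of _ "e - dist m y"] ballI)
      show "y \<in> Om" "0 < e - dist m y" "ball y (e - dist m y) \<subseteq> Om"
        using y e(2) sub by auto
      show "X z = X y" if "z \<in> ball y (e - dist m y)" for z
        using that sub y e(3) by auto
    qed
  qed
  then show "\<exists>e>0. ball m e \<subseteq> OmX X"
    using e(1) by blast
qed

lemma OmX_sets [measurable]: "OmX X \<in> sets lebesgue"
  using borel_open[OF open_OmX, of X] by (simp add: sets_completionI_sets)

lemma max_int_subset_Om: "max_int X a b \<Longrightarrow> {a<..<b} \<subseteq> Om"
  using OmX_subset_Om unfolding max_int_def by blast

lemma max_int_less_eq:
  assumes "max_int X a b" "max_int X a' b'" "x \<in> {a<..<b}" "x \<in> {a'<..<b'}"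
  shows "a \<le> a'" "b' \<le> b"
proof -
  show "a \<le> a'"
  proof (rule ccontr)
    assume "\<not> a \<le> a'"
    then have "a \<in> {a'<..<b'}" using assms(1,3,4) unfolding max_int_def by auto
    then show False using assms(1,2) unfolding max_int_def by blast
  qed
  show "b' \<le> b"
  proof (rule ccontr)
    assume "\<not> b' \<le> b"
    then have "b \<in> {a'<..<b'}" using assms(1,3,4) unfolding max_int_def by auto
    then show False using assms(1,2) unfolding max_int_def by blast
  qed
qed

lemma max_int_unique:
  assumes "max_int X a b" "max_int X a' b'" "x \<in> {a<..<b}" "x \<in> {a'<..<b'}"
  shows "a = a'" "b = b'"
  using max_int_less_eq[OF assms] max_int_less_eq[OF assms(2,1,4,3)] by simp_all

lemma open_connected_eq_Ioo:
  fixes C :: "real set"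
  assumes "open C" "connected C" "C \<noteq> {}" "bdd_below C" "bdd_above C"
  shows "C = {Inf C<..<Sup C}"
proof
  have "Inf C \<notin> C"
  proof
    assume "Inf C \<in> C"
    then obtain e where "e > 0" "ball (Inf C) e \<subseteq> C"
      using assms(1) open_contains_ball by blast
    then have "Inf C - e / 2 \<in> C"
      by (auto simp: dist_real_def)
    then show False
      using cInf_lower[OF _ assms(4), of "Inf C - e / 2"] \<open>e > 0\<close> by simp
  qed
  moreover have "Sup C \<notin> C"
  proof
    assume "Sup C \<in> C"
    then obtain e where "e > 0" "ball (Sup C) e \<subseteq> C"
      using assms(1) open_contains_ball by blast
    then have "Sup C + e / 2 \<in> C"
      by (auto simp: dist_real_def)
    then show False
      using cSup_upper[OF _ assms(5), of "Sup C + e / 2"] \<open>e > 0\<close> by simp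
  qed
  ultimately show "C \<subseteq> {Inf C<..<Sup C}"
    using cInf_lower[OF _ assms(4)] cSup_upper[OF _ assms(5)] by (force simp: order_le_less)
  show "{Inf C<..<Sup C} \<subseteq> C"
  proof
    fix y assume "y \<in> {Inf C<..<Sup C}"
    then obtain c1 c2 where "c1 \<in> C" "c1 < y" "c2 \<in> C" "y < c2"
      using assms(3) cInf_lessD[of C y] less_cSupD[of C y] by auto
    then show "y \<in> C"
      using assms(2) unfolding is_interval_connected_1[symmetric] is_interval_1 by (meson less_imp_le)
  qed
qed

lemma OmX_obtains_max_int:
  assumes "m \<in> OmX X"
  obtains a b where "max_int X a b" "m \<in> {a<..<b}"
proof -
  define C where "C = connected_component_set (OmX X) m"
  have C_sub: "C \<subseteq> OmX X"
    unfolding C_def by (rule connected_component_subset)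
  have m_C: "m \<in> C"
    using assms by (simp add: C_def)
  have bdd: "bdd_below C" "bdd_above C"
    using C_sub OmX_subset_Om[of X] unfolding Om_def
    by (auto intro!: bdd_belowI[of _ 0] bdd_aboveI[of _ 1] less_imp_le)
  have C_eq: "C = {Inf C<..<Sup C}"
    using open_connected_component[OF open_OmX] m_C bdd
    by (intro open_connected_eq_Ioo) (auto simp: C_def simp del: mem_Collect_eq)
  obtain T where "closed T" "C = OmX X \<inter> T"
    using closedin_connected_component[of "OmX X" m] unfolding C_def closedin_closed by blast
  then have "OmX X \<inter> closure C \<subseteq> C"
    using closure_minimal[of C T] by blast
  moreover have "Inf C \<in> closure C" "Sup C \<in> closure C"
    using closure_contains_Inf[OF _ bdd(1)] closure_contains_Sup[OF _ bdd(2)] m_C by blast+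
  ultimately have "Inf C \<notin> OmX X" "Sup C \<notin> OmX X"
    using C_eq by (metis IntI greaterThanLessThan_iff less_irrefl subsetD)+
  moreover have m_in: "m \<in> {Inf C<..<Sup C}"
    using m_C C_eq by blast
  moreover have "{Inf C<..<Sup C} \<subseteq> OmX X"
    using C_sub C_eq by metis
  ultimately have "max_int X (Inf C) (Sup C)"
    unfolding max_int_def by auto
  then show ?thesis
    using that m_in by blast
qed

lemma max_int_constant_on:
  assumes "max_int X a b"
  shows "X constant_on {a<..<b}"
proof (rule locally_constant_imp_constant)
  fix x assume x: "x \<in> {a<..<b}"
  then obtain e where e: "e > 0" "\<forall>y\<in>ball x e. X y = X x"
    using assms unfolding max_int_def OmX_def by blast
  have "openin (top_of_set {a<..<b}) ({a<..<b} \<inter> ball x e)"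
    by (rule openin_open_Int) simp
  moreover have "x \<in> {a<..<b} \<inter> ball x e"
    using x e(1) by simp
  moreover have "\<forall>y\<in>{a<..<b} \<inter> ball x e. X y = X x"
    using e(2) by blast
  ultimately show "\<exists>T. openin (top_of_set {a<..<b}) T \<and> x \<in> T \<and> (\<forall>y\<in>T. X y = X x)"
    by blast
qed simp

definition max_ints :: "(real \<Rightarrow> real) \<Rightarrow> real set set" where
  "max_ints X = {{a<..<b} | a b. max_int X a b}"

lemma disjoint_max_ints: "disjoint (max_ints X)"
proof (rule pairwiseI)
  fix S T assume "S \<in> max_ints X" "T \<in> max_ints X" "S \<noteq> T"
  then obtain a b a' b' where "max_int X a b" "max_int X a' b'" "S = {a<..<b}" "T = {a'<..<b'}"
    unfolding max_ints_def by blast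
  then show "disjnt S T"
    using max_int_unique \<open>S \<noteq> T\<close> unfolding disjnt_def by blast
qed

lemma countable_max_ints: "countable (max_ints X)"
  by (rule countable_disjoint_open_subsets[OF _ disjoint_max_ints]) (auto simp: max_ints_def)

lemma Union_max_ints: "\<Union>(max_ints X) = OmX X"
proof
  show "\<Union>(max_ints X) \<subseteq> OmX X"
    unfolding max_ints_def max_int_def by blast
  show "OmX X \<subseteq> \<Union>(max_ints X)"
    unfolding max_ints_def by (blast elim: OmX_obtains_max_int)
qed

lemma max_ints_sets: "max_ints X \<subseteq> sets lebesgue"
  unfolding max_ints_def by auto

lemma set_integral_OmX_nonpos:
  fixes f :: "real \<Rightarrow> real"
  assumes "set_integrable lebesgue (OmX X) f"
    and "\<And>a b. max_int X a b \<Longrightarrow> (LINT x:{a<..<b}|lebesgue. f x) \<le> 0"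
  shows "(LINT x:OmX X|lebesgue. f x) \<le> 0"
  using set_integral_Union_nonpos[OF countable_max_ints disjoint_max_ints max_ints_sets] assms
  unfolding Union_max_ints by (auto simp: max_ints_def)

lemma set_integral_OmX_eq_0:
  fixes f :: "real \<Rightarrow> real"
  assumes "set_integrable lebesgue (OmX X) f"
    and "\<And>a b. max_int X a b \<Longrightarrow> (LINT x:{a<..<b}|lebesgue. f x) = 0"
  shows "(LINT x:OmX X|lebesgue. f x) = 0"
  using set_integral_Union_eq_0[OF countable_max_ints disjoint_max_ints max_ints_sets] assms
  unfolding Union_max_ints by (auto simp: max_ints_def)

lemma nn_integral_OmX_mono:
  assumes "g \<in> borel_measurable lebesgue" "h \<in> borel_measurable lebesgue"
    and "\<And>a b. max_int X a b \<Longrightarrow> (\<integral>\<^sup>+x\<in>{a<..<b}. g x \<partial>lebesgue) \<le> (\<integral>\<^sup>+x\<in>{a<..<b}. h x \<partial>lebesgue)"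
  shows "(\<integral>\<^sup>+x\<in>OmX X. g x \<partial>lebesgue) \<le> (\<integral>\<^sup>+x\<in>OmX X. h x \<partial>lebesgue)"
  using nn_integral_Union_mono[OF countable_max_ints disjoint_max_ints max_ints_sets assms(1,2)] assms(3)
  unfolding Union_max_ints by (auto simp: max_ints_def)

lemma set_integral_const_Ioo:
  "a \<le> b \<Longrightarrow> (LINT x:{a<..<b::real}|lebesgue. c) = (b - a) * c"
  using set_integral_const[of "{a<..<b}" lebesgue c] by simp

lemma projH_max_int:
  assumes "max_int X a b" "m \<in> {a<..<b}"
  shows "projH X U m = (LINT w:{a<..<b}|lebesgue. U w) / (b - a)"
proof -
  define p where "p = (SOME (a, b). max_int X a b \<and> m \<in> {a<..<b})"
  have "max_int X (fst p) (snd p) \<and> m \<in> {fst p<..<snd p}"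
    using someI[of "\<lambda>(a, b). max_int X a b \<and> m \<in> {a<..<b}" "(a, b)"] assms
    by (simp add: p_def case_prod_beta)
  then have "p = (a, b)"
    using max_int_unique[OF assms(1) _ assms(2)] by (metis prod.collapse)
  then show ?thesis
    unfolding projH_def using assms p_def by auto
qed

lemma projH_outside: "m \<notin> OmX X \<Longrightarrow> projH X U m = U m"
  unfolding projH_def max_int_def by auto

lemma set_integral_diff_projH_max_int:
  assumes "U \<in> L2" "max_int X a b"
  shows "(LINT x:{a<..<b}|lebesgue. U x - projH X U x) = 0"
proof -
  have ab: "a < b" "{a<..<b} \<subseteq> Om"
    using assms(2) max_int_subset_Om unfolding max_int_def by auto
  define c where "c = (LINT w:{a<..<b}|lebesgue. U w) / (b - a)"
  have "(LINT x:{a<..<b}|lebesgue. U x - projH X U x) = (LINT x:{a<..<b}|lebesgue. U x - c)"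
    by (rule set_lebesgue_integral_cong) (auto simp: projH_max_int[OF assms(2)] c_def)
  also have "\<dots> = (LINT x:{a<..<b}|lebesgue. U x) - (b - a) * c"
    using set_integral_diff(2)[OF set_integrable_L2[OF assms(1) _ ab(2)], of "\<lambda>_. c"]
      set_integral_const_Ioo[of a b c] ab(1)
    by (simp add: set_integrable_def lmeasurable_iff_integrable[symmetric] mult.commute)
  also have "\<dots> = 0"
    using ab(1) by (simp add: c_def)
  finally show ?thesis .
qed

lemma continuous_on_projH_OmX: "continuous_on (OmX X) (projH X U)"
proof (rule continuous_at_imp_continuous_on, intro ballI)
  fix x assume "x \<in> OmX X"
  then obtain a b where ab: "max_int X a b" "x \<in> {a<..<b}"
    by (rule OmX_obtains_max_int)
  have "((\<lambda>_. (LINT w:{a<..<b}|lebesgue. U w) / (b - a)) has_real_derivative 0) (at x)"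
    by simp
  then have "(projH X U has_real_derivative 0) (at x)"
    by (rule has_field_derivative_transform_within_open[OF _ open_greaterThanLessThan ab(2)])
       (simp add: projH_max_int[OF ab(1)])
  then show "isCont (projH X U) x"
    by (rule DERIV_isCont)
qed

lemma projH_measurable:
  assumes "U \<in> L2"
  shows "(\<lambda>x. indicat_real Om x * projH X U x) \<in> borel_measurable lebesgue"
proof -
  have "(\<lambda>x. indicat_real (OmX X) x *\<^sub>R projH X U x) \<in> borel_measurable borel"
    by (rule borel_measurable_continuous_on_indicator[OF open_OmX[THEN borel_open] continuous_on_projH_OmX])
  then have "(\<lambda>x. indicat_real (OmX X) x * projH X U x) \<in> borel_measurable lebesgue"
    by (simp add: measurable_completion)
  moreover have "(\<lambda>x. (1 - indicat_real (OmX X) x) * (indicat_real Om x * U x)) \<in> borel_measurable lebesgue"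
    using L2D(1)[OF assms] by simp
  moreover have "indicat_real Om x * projH X U x
      = indicat_real (OmX X) x * projH X U x + (1 - indicat_real (OmX X) x) * (indicat_real Om x * U x)" for x
    using OmX_subset_Om[of X] by (cases "x \<in> OmX X") (auto simp: projH_outside)
  ultimately show ?thesis
    by simp
qed

lemma square_mean_le_mean_square:
  fixes U :: "real \<Rightarrow> real"
  assumes "a < b" "set_integrable lebesgue {a<..<b} U" "set_integrable lebesgue {a<..<b} (\<lambda>x. (U x)\<^sup>2)"
  shows "(b - a) * ((LINT x:{a<..<b}|lebesgue. U x) / (b - a))\<^sup>2 \<le> (LINT x:{a<..<b}|lebesgue. (U x)\<^sup>2)"
proof -
  define I where "I = {a<..<b}"
  define c where "c = (LINT x:I|lebesgue. U x) / (b - a)"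
  have const_int: "set_integrable lebesgue I (\<lambda>_. d)" for d :: real
    unfolding I_def set_integrable_def using lmeasurable_iff_integrable[of "{a<..<b}"]
    by (simp add: mult.commute)
  have "0 \<le> (LINT x:I|lebesgue. (U x - c)\<^sup>2)"
    unfolding set_lebesgue_integral_def
    by (intro Bochner_Integration.integral_nonneg) (simp add: indicator_def)
  also have "(LINT x:I|lebesgue. (U x - c)\<^sup>2)
      = (LINT x:I|lebesgue. (U x)\<^sup>2 - 2 * c * U x + c\<^sup>2)"
    by (simp add: power2_diff algebra_simps)
  also have "\<dots> = (LINT x:I|lebesgue. (U x)\<^sup>2) - 2 * c * (LINT x:I|lebesgue. U x) + (b - a) * c\<^sup>2"
    using assms(1,2,3) const_int
    by (simp add: I_def set_integral_add set_integral_diff set_integral_const_Ioo)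
  also have "\<dots> = (LINT x:I|lebesgue. (U x)\<^sup>2) - (b - a) * c\<^sup>2"
  proof -
    have "(LINT x:I|lebesgue. U x) = (b - a) * c"
      using assms(1) by (simp add: c_def)
    then show ?thesis
      by (simp only:) (simp add: power2_eq_square algebra_simps)
  qed
  finally have "0 \<le> (LINT x:I|lebesgue. (U x)\<^sup>2) - (b - a) * c\<^sup>2" .
  then show ?thesis
    by (simp add: I_def c_def)
qed

lemma nn_integral_projH_sq_max_int_le:
  assumes "U \<in> L2" "max_int X a b"
  shows "(\<integral>\<^sup>+x\<in>{a<..<b}. ennreal (indicat_real Om x * (projH X U x)\<^sup>2) \<partial>lebesgue)
       \<le> (\<integral>\<^sup>+x\<in>{a<..<b}. ennreal (indicat_real Om x * (U x)\<^sup>2) \<partial>lebesgue)"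
proof -
  have ab: "a < b" "{a<..<b} \<subseteq> Om"
    using assms(2) max_int_subset_Om unfolding max_int_def by auto
  define c where "c = (LINT w:{a<..<b}|lebesgue. U w) / (b - a)"
  have U_sq_int: "integrable lebesgue (\<lambda>x. indicat_real {a<..<b} x * (U x)\<^sup>2)"
    using set_integrable_subset[of lebesgue Om "\<lambda>x. (U x)\<^sup>2" "{a<..<b}"] assms(1) ab(2)
    unfolding L2_def set_integrable_def by simp
  have "(\<integral>\<^sup>+x\<in>{a<..<b}. ennreal (indicat_real Om x * (projH X U x)\<^sup>2) \<partial>lebesgue)
      = (\<integral>\<^sup>+x\<in>{a<..<b}. ennreal (c\<^sup>2) \<partial>lebesgue)"
    using ab(2) by (intro nn_integral_cong) (auto simp: indicator_def projH_max_int[OF assms(2)] c_def)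
  also have "\<dots> = ennreal (c\<^sup>2) * emeasure lebesgue {a<..<b}"
    by (rule nn_integral_cmult_indicator) simp
  also have "\<dots> = ennreal ((b - a) * c\<^sup>2)"
    using ab(1) by (simp add: ennreal_mult' mult.commute)
  also have "\<dots> \<le> ennreal (LINT x:{a<..<b}|lebesgue. (U x)\<^sup>2)"
    using square_mean_le_mean_square[OF ab(1) set_integrable_L2[OF assms(1) _ ab(2)]] U_sq_int
    by (intro ennreal_leI) (simp add: c_def set_integrable_def)
  also have "\<dots> = (\<integral>\<^sup>+x. ennreal (indicat_real {a<..<b} x * (U x)\<^sup>2) \<partial>lebesgue)"
    unfolding set_lebesgue_integral_def real_scaleR_def
    by (rule nn_integral_eq_integral[OF U_sq_int, symmetric]) simp
  also have "\<dots> = (\<integral>\<^sup>+x\<in>{a<..<b}. ennreal (indicat_real Om x * (U x)\<^sup>2) \<partial>lebesgue)"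
    using ab(2) by (intro nn_integral_cong) (auto simp: indicator_def)
  finally show ?thesis .
qed

lemma nn_integral_projH_square_le:
  assumes "U \<in> L2"
  shows "(\<integral>\<^sup>+x. ennreal (indicat_real Om x * (projH X U x)\<^sup>2) \<partial>lebesgue)
    \<le> (\<integral>\<^sup>+x. ennreal (indicat_real Om x * (U x)\<^sup>2) \<partial>lebesgue)"
proof -
  define g where "g x = ennreal (indicat_real Om x * (projH X U x)\<^sup>2)" for x
  define gU where "gU x = ennreal (indicat_real Om x * (U x)\<^sup>2)" for x
  have g_meas: "g \<in> borel_measurable lebesgue" and gU_meas: "gU \<in> borel_measurable lebesgue"
    unfolding g_def gU_def
    using measurable_indicator_Om_square[OF projH_measurable[OF assms]]
      measurable_indicator_Om_square[OF L2D(1)[OF assms]] by simp_all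
  have split: "(\<integral>\<^sup>+x. h x \<partial>lebesgue) = (\<integral>\<^sup>+x\<in>OmX X. h x \<partial>lebesgue) + (\<integral>\<^sup>+x\<in>- OmX X. h x \<partial>lebesgue)"
    if [measurable]: "h \<in> borel_measurable lebesgue" for h :: "real \<Rightarrow> ennreal"
    by (subst nn_integral_add[symmetric]) (auto intro!: nn_integral_cong split: split_indicator)
  have outside: "(\<integral>\<^sup>+x\<in>- OmX X. g x \<partial>lebesgue) = (\<integral>\<^sup>+x\<in>- OmX X. gU x \<partial>lebesgue)"
    by (intro nn_integral_cong) (auto simp: g_def gU_def projH_outside split: split_indicator)
  have "(\<integral>\<^sup>+x. g x \<partial>lebesgue)
      = (\<integral>\<^sup>+x\<in>OmX X. g x \<partial>lebesgue) + (\<integral>\<^sup>+x\<in>- OmX X. gU x \<partial>lebesgue)"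
    using split[OF g_meas] outside by simp
  also have "\<dots> \<le> (\<integral>\<^sup>+x\<in>OmX X. gU x \<partial>lebesgue) + (\<integral>\<^sup>+x\<in>- OmX X. gU x \<partial>lebesgue)"
    using nn_integral_OmX_mono[OF g_meas gU_meas] nn_integral_projH_sq_max_int_le[OF assms]
    by (intro add_right_mono) (simp add: g_def gU_def)
  also have "\<dots> = (\<integral>\<^sup>+x. gU x \<partial>lebesgue)"
    using split[OF gU_meas] by simp
  finally show ?thesis
    by (simp add: g_def gU_def)
qed

lemma projH_L2:
  assumes "U \<in> L2"
  shows "projH X U \<in> L2"
proof (rule L2I[OF projH_measurable[OF assms]])
  have "(\<integral>\<^sup>+x. ennreal (indicat_real Om x * (U x)\<^sup>2) \<partial>lebesgue) < \<infinity>"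
    using nn_integral_eq_integral[OF L2D(2)[OF assms]] by simp
  then have "(\<integral>\<^sup>+x. ennreal (norm (indicat_real Om x * (projH X U x)\<^sup>2)) \<partial>lebesgue) < \<infinity>"
    using nn_integral_projH_square_le[OF assms, of X] by (simp add: indicator_def)
  then show "integrable lebesgue (\<lambda>x. indicat_real Om x * (projH X U x)\<^sup>2)"
    using measurable_indicator_Om_square[OF projH_measurable[OF assms]] by (intro integrableI_bounded)
qed

definition HX :: "(real \<Rightarrow> real) \<Rightarrow> (real \<Rightarrow> real) set" where
  "HX X = {h \<in> L2. \<forall>a b. max_int X a b \<longrightarrow> h constant_on {a<..<b}}"

lemma projH_in_HX: "U \<in> L2 \<Longrightarrow> projH X U \<in> HX X"
  unfolding HX_def constant_on_def by (auto intro: projH_L2 simp: projH_max_int)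

lemma Kcone_in_HX: "X \<in> Kcone \<Longrightarrow> X \<in> HX X"
  unfolding HX_def Kcone_def using max_int_constant_on by blast

lemma indicator_in_HX:
  assumes "t \<notin> OmX X"
  shows "indicat_real {t<..} \<in> HX X"
  unfolding HX_def
proof (intro CollectI conjI allI impI L2_indicator)
  fix a b assume "max_int X a b"
  then have "t \<le> a \<or> b \<le> t"
    using assms unfolding max_int_def by (meson greaterThanLessThan_iff not_le subsetD)
  then show "indicat_real {t<..} constant_on {a<..<b}"
    unfolding constant_on_def by (auto simp: indicator_def)
qed simp

lemma set_integral_Om_split:
  fixes f :: "real \<Rightarrow> real"
  assumes "set_integrable lebesgue Om f"
  shows "(LINT x:Om|lebesgue. f x) = (LINT x:OmX X|lebesgue. f x) + (LINT x:Om - OmX X|lebesgue. f x)"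
  using OmX_subset_Om[of X]
  by (subst set_integral_Un[symmetric]) (auto intro: set_integrable_subset[OF assms] simp: Un_absorb1)

lemma set_integral_OmX_mult_HX_eq_0:
  assumes f: "f \<in> L2" and h: "h \<in> HX X"
    and mean: "\<And>a b. max_int X a b \<Longrightarrow> (LINT x:{a<..<b}|lebesgue. f x) = 0"
  shows "(LINT x:OmX X|lebesgue. f x * h x) = 0"
proof (rule set_integral_OmX_eq_0)
  show "set_integrable lebesgue (OmX X) (\<lambda>x. f x * h x)"
    using set_integrable_subset[OF set_integrable_mult_L2[OF f] _ OmX_subset_Om] h
    by (simp add: HX_def)
  fix a b assume ab: "max_int X a b"
  then obtain c where "\<forall>x\<in>{a<..<b}. h x = c"
    using h unfolding HX_def constant_on_def by blast
  then have "(LINT x:{a<..<b}|lebesgue. f x * h x) = (LINT x:{a<..<b}|lebesgue. c * f x)"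
    by (intro set_lebesgue_integral_cong) auto
  then show "(LINT x:{a<..<b}|lebesgue. f x * h x) = 0"
    using mean[OF ab] by simp
qed

lemma ip_HX_eq_0:
  assumes f: "f \<in> L2" and h: "h \<in> HX X"
    and outside: "AE x in lebesgue. x \<in> Om - OmX X \<longrightarrow> f x = 0"
    and mean: "\<And>a b. max_int X a b \<Longrightarrow> (LINT x:{a<..<b}|lebesgue. f x) = 0"
  shows "ip f h = 0"
proof -
  have "(LINT x:Om - OmX X|lebesgue. f x * h x) = 0"
    unfolding set_lebesgue_integral_def
    by (rule integral_eq_zero_AE) (use outside in \<open>eventually_elim, auto simp: indicator_def\<close>)
  then show ?thesis
    unfolding ip_def
    using set_integral_Om_split[OF set_integrable_mult_L2[OF f], of h X] h
      set_integral_OmX_mult_HX_eq_0[OF f h mean]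
    by (simp add: HX_def)
qed

lemma ip_diff_projH_HX_eq_0:
  assumes "U \<in> L2" "h \<in> HX X"
  shows "ip (\<lambda>x. U x - projH X U x) h = 0"
proof (rule ip_HX_eq_0[OF _ assms(2)])
  show "(\<lambda>x. U x - projH X U x) \<in> L2"
    by (rule L2_diff[OF assms(1) projH_L2[OF assms(1)]])
  show "AE x in lebesgue. x \<in> Om - OmX X \<longrightarrow> U x - projH X U x = 0"
    by (simp add: projH_outside)
qed (rule set_integral_diff_projH_max_int[OF assms(1)])

section \<open>Normal vectors of the cone of nondecreasing functions\<close>

lemma normal_cone_L2: "W \<in> normal_cone X \<Longrightarrow> W \<in> L2"
  unfolding normal_cone_def by simp

lemma normal_coneD: "W \<in> normal_cone X \<Longrightarrow> Y \<in> Kcone \<Longrightarrow> ip W (\<lambda>x. Y x - X x) \<le> 0"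
  unfolding normal_cone_def by simp

lemma Kcone_add_comp:
  assumes "X \<in> Kcone" "q \<in> borel_measurable borel" "\<And>v. \<bar>q v\<bar> \<le> B"
    and "mono (\<lambda>v. v + q v)"
  shows "(\<lambda>x. X x + q (X x)) \<in> Kcone"
proof -
  have "X \<in> L2" "mono_on Om X"
    using assms(1) unfolding Kcone_def by auto
  then show ?thesis
    unfolding Kcone_def
    using L2_add[OF _ L2_comp_bounded[OF _ assms(2,3)]] monoD[OF assms(4)]
    by (auto simp: mono_on_def)
qed

lemma Kcone_add_indicator:
  assumes "X \<in> Kcone"
  shows "(\<lambda>x. X x + indicat_real {m<..} x) \<in> Kcone"
proof -
  have X: "X \<in> L2" "mono_on Om X"
    using assms unfolding Kcone_def by auto
  have "mono_on Om (\<lambda>x. X x + indicat_real {m<..} x)"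
  proof (rule mono_onI)
    fix r s assume "r \<in> Om" "s \<in> Om" "r \<le> s"
    then show "X r + indicat_real {m<..} r \<le> X s + indicat_real {m<..} s"
      using mono_onD[OF X(2)] by (intro add_mono) (auto simp: indicator_def)
  qed
  then show ?thesis
    unfolding Kcone_def using L2_add[OF X(1) L2_indicator[of "{m<..}"]] by simp
qed

lemma normal_cone_ip_indicator_nonpos:
  assumes "X \<in> Kcone" "W \<in> normal_cone X"
  shows "ip W (indicat_real {m<..}) \<le> 0"
  using normal_coneD[OF assms(2) Kcone_add_indicator[OF assms(1)]] by simp

text \<open>Both X + g(X)/L and X - g(X)/L are nondecreasing, so both signs are admissible test directions.\<close>

lemma normal_cone_orthogonal_comp:
  assumes X: "X \<in> Kcone" and W: "W \<in> normal_cone X"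
    and g: "g \<in> borel_measurable borel" "\<And>v. \<bar>g v\<bar> \<le> B" "mono g"
    and lipschitz: "\<And>u v. u \<le> v \<Longrightarrow> g v - g u \<le> L * (v - u)" and L: "0 < L"
  shows "ip W (\<lambda>x. g (X x)) = 0"
proof -
  have test: "ip W (\<lambda>x. c * g (X x)) \<le> 0"
    if "\<bar>c\<bar> \<le> 1 / L" "mono (\<lambda>v. v + c * g v)" for c
  proof -
    have "\<bar>c * g v\<bar> \<le> \<bar>c\<bar> * B" for v
      using g(2)[of v] by (simp add: abs_mult mult_left_mono)
    then have "(\<lambda>x. X x + c * g (X x)) \<in> Kcone"
      using g(1) that(2) by (intro Kcone_add_comp[OF X]) auto
    then show ?thesis
      using normal_coneD[OF W] by fastforce
  qed
  have "ip W (\<lambda>x. (1 / L) * g (X x)) \<le> 0"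
    using L monoD[OF g(3)] by (intro test) (auto intro!: monoI add_mono divide_right_mono)
  moreover have "ip W (\<lambda>x. (- 1 / L) * g (X x)) \<le> 0"
  proof (intro test monoI)
    fix u v :: real assume "u \<le> v"
    then have "(g v - g u) / L \<le> v - u"
      using lipschitz L by (simp add: divide_le_eq mult.commute)
    then show "u + - 1 / L * g u \<le> v + - 1 / L * g v"
      by (simp add: diff_divide_distrib)
  qed (use L in simp)
  ultimately have "ip W (\<lambda>x. g (X x)) / L \<le> 0" "- ip W (\<lambda>x. g (X x)) / L \<le> 0"
    unfolding ip_cmult_right by simp_all
  then show ?thesis
    using L by (simp add: divide_le_0_iff zero_le_divide_iff)
qed

lemma ip_comp_tendsto:
  assumes W: "W \<in> L2" and X: "X \<in> L2"
    and g [measurable]: "\<And>n. g n \<in> borel_measurable borel"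
    and g_bound: "\<And>n v. \<bar>g n v\<bar> \<le> 1" and g_lim: "\<And>v. (\<lambda>n. g n v) \<longlonglongrightarrow> h v"
    and h [measurable]: "h \<in> borel_measurable borel"
  shows "(\<lambda>n. ip W (\<lambda>x. g n (X x))) \<longlonglongrightarrow> ip W (\<lambda>x. h (X x))"
proof -
  have [measurable]: "(\<lambda>x. indicat_real Om x * W x) \<in> borel_measurable lebesgue"
    "(\<lambda>x. indicat_real Om x * X x) \<in> borel_measurable lebesgue"
    using L2D(1)[OF W] L2D(1)[OF X] by simp_all
  have restrict: "indicat_real Om x *\<^sub>R (W x * f (X x))
      = indicat_real Om x * W x * f (indicat_real Om x * X x)" for f x
    by (simp add: indicator_def)
  show ?thesis
    unfolding ip_def set_lebesgue_integral_def restrict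
  proof (rule integral_dominated_convergence[where w = "\<lambda>x. \<bar>indicat_real Om x * W x\<bar>"])
    show "integrable lebesgue (\<lambda>x. \<bar>indicat_real Om x * W x\<bar>)"
      using set_integrable_L2[OF W Om_sets order_refl]
      unfolding set_integrable_def by (simp add: integrable_abs)
    show "AE x in lebesgue. (\<lambda>n. indicat_real Om x * W x * g n (indicat_real Om x * X x))
        \<longlonglongrightarrow> indicat_real Om x * W x * h (indicat_real Om x * X x)"
      using g_lim by (intro AE_I2 tendsto_intros)
    show "AE x in lebesgue. norm (indicat_real Om x * W x * g n (indicat_real Om x * X x))
        \<le> \<bar>indicat_real Om x * W x\<bar>" for n
      using g_bound by (intro AE_I2) (simp add: abs_mult mult_left_le)
  qed measurable
qed

lemma clamp_mono: "x \<le> y \<Longrightarrow> min (max x 0) 1 \<le> min (max y 0) (1::real)"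
  by (simp add: min_def max_def)

lemma clamp_diff_le: "x \<le> y \<Longrightarrow> min (max y 0) 1 - min (max x 0) 1 \<le> y - (x::real)"
  by (simp add: min_def max_def)

lemma eventually_one_le_Suc_mult:
  assumes "0 < (y::real)"
  shows "\<forall>\<^sub>F n in sequentially. 1 \<le> real (Suc n) * y"
proof -
  obtain n0 :: nat where n0: "1 / y \<le> real n0"
    using real_arch_simple by blast
  have "1 \<le> real (Suc n) * y" if "n0 \<le> n" for n
  proof -
    have "1 / y \<le> real (Suc n)"
      using n0 that by (meson le_SucI of_nat_le_iff order_trans)
    then show ?thesis
      using assms by (simp add: divide_le_eq mult.commute)
  qed
  then show ?thesis
    unfolding eventually_sequentially by blast
qed

lemma tendsto_clamp_greaterThan:
  "(\<lambda>n. min (max (real (Suc n) * (v - k)) 0) 1) \<longlonglongrightarrow> indicat_real {k<..} v"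
proof (cases "k < v")
  case True
  have "\<forall>\<^sub>F n in sequentially. min (max (real (Suc n) * (v - k)) 0) 1 = 1"
    using eventually_one_le_Suc_mult[of "v - k"] True
    by (auto elim!: eventually_mono simp: min_def max_def)
  then show ?thesis
    using True by (simp add: tendsto_eventually)
next
  case False
  then show ?thesis
    by (simp add: mult_nonneg_nonpos)
qed

lemma tendsto_clamp_atLeast:
  "(\<lambda>n. min (max (real (Suc n) * (v - k) + 1) 0) 1) \<longlonglongrightarrow> indicat_real {k..} v"
proof (cases "k \<le> v")
  case False
  have "\<forall>\<^sub>F n in sequentially. min (max (real (Suc n) * (v - k) + 1) 0) 1 = 0"
    using eventually_one_le_Suc_mult[of "k - v"] False
    by (auto elim!: eventually_mono simp: min_def max_def algebra_simps)
  then show ?thesis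
    using False by (simp add: tendsto_eventually)
qed simp

lemma normal_cone_orthogonal_level_sets:
  assumes X: "X \<in> Kcone" and W: "W \<in> normal_cone X"
  shows "ip W (\<lambda>x. indicat_real {k<..} (X x)) = 0" "ip W (\<lambda>x. indicat_real {k..} (X x)) = 0"
proof -
  have clamp_orth: "ip W (\<lambda>x. min (max (real (Suc n) * (X x - k) + c) 0) 1) = 0" for n c
  proof (rule normal_cone_orthogonal_comp[OF X W, where B = 1 and L = "real (Suc n)"])
    show "mono (\<lambda>v. min (max (real (Suc n) * (v - k) + c) 0) 1)"
      by (intro monoI clamp_mono) (simp add: mult_left_mono)
    show "min (max (real (Suc n) * (v - k) + c) 0) 1 - min (max (real (Suc n) * (u - k) + c) 0) 1
        \<le> real (Suc n) * (v - u)" if "u \<le> v" for u v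
    proof -
      have "real (Suc n) * (u - k) + c \<le> real (Suc n) * (v - k) + c"
        using that by (intro add_right_mono mult_left_mono) auto
      then show ?thesis
        using clamp_diff_le by (fastforce simp: algebra_simps)
    qed
  qed simp_all
  have W_L2: "W \<in> L2" and X_L2: "X \<in> L2"
    using normal_cone_L2[OF W] X by (simp_all add: Kcone_def)
  have "(\<lambda>n. ip W (\<lambda>x. min (max (real (Suc n) * (X x - k)) 0) 1))
      \<longlonglongrightarrow> ip W (\<lambda>x. indicat_real {k<..} (X x))"
    by (rule ip_comp_tendsto[OF W_L2 X_L2 _ _ tendsto_clamp_greaterThan]) simp_all
  then show "ip W (\<lambda>x. indicat_real {k<..} (X x)) = 0"
    using clamp_orth[of _ 0] LIMSEQ_unique[OF _ tendsto_const] by simp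
  have "(\<lambda>n. ip W (\<lambda>x. min (max (real (Suc n) * (X x - k) + 1) 0) 1))
      \<longlonglongrightarrow> ip W (\<lambda>x. indicat_real {k..} (X x))"
    by (rule ip_comp_tendsto[OF W_L2 X_L2 _ _ tendsto_clamp_atLeast]) simp_all
  then show "ip W (\<lambda>x. indicat_real {k..} (X x)) = 0"
    using clamp_orth[of _ 1] LIMSEQ_unique[OF _ tendsto_const] by simp
qed

lemma normal_cone_orthogonal_const:
  assumes "X \<in> Kcone" "W \<in> normal_cone X"
  shows "ip W (\<lambda>_. 1) = 0"
  using normal_cone_orthogonal_comp[OF assms, of "\<lambda>_. 1" 1 1] by (simp add: mono_def)

lemma ip_indicator_atLeast:
  assumes "W \<in> L2"
  shows "ip W (indicat_real {t..}) = ip W (indicat_real {t<..})"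
  unfolding ip_def set_lebesgue_integral_def
proof (rule integral_cong_AE)
  have meas: "(\<lambda>x. indicat_real Om x * W x * indicat_real A x) \<in> borel_measurable lebesgue"
    if "A \<in> sets lebesgue" for A
    using borel_measurable_times[OF L2D(1)[OF assms] borel_measurable_indicator[OF that]] .
  show "(\<lambda>x. indicat_real Om x *\<^sub>R (W x * indicat_real {t..} x)) \<in> borel_measurable lebesgue"
    using meas[of "{t..}"] by (simp add: mult.assoc)
  show "(\<lambda>x. indicat_real Om x *\<^sub>R (W x * indicat_real {t<..} x)) \<in> borel_measurable lebesgue"
    using meas[of "{t<..}"] by (simp add: mult.assoc)
  show "AE x in lebesgue. indicat_real Om x *\<^sub>R (W x * indicat_real {t..} x)
      = indicat_real Om x *\<^sub>R (W x * indicat_real {t<..} x)"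
    using AE_lebesgue_neq[of t] by eventually_elim (auto simp: indicator_def)
qed

lemma not_in_OmX_strict_mono_at:
  assumes mono: "mono_on Om X" and t: "t \<in> Om" "t \<notin> OmX X"
  shows "(\<forall>x\<in>Om. t < x \<longrightarrow> X t < X x) \<or> (\<forall>x\<in>Om. x < t \<longrightarrow> X x < X t)"
proof (rule ccontr)
  assume "\<not> ?thesis"
  then obtain x0 x1 where x0: "x0 \<in> Om" "x0 < t" "X t \<le> X x0" and x1: "x1 \<in> Om" "t < x1" "X x1 \<le> X t"
    by (meson not_less)
  have between: "{x0..x1} \<subseteq> Om"
    using x0 x1 by (auto simp: Om_def)
  have const: "X y = X x0" if "y \<in> {x0..x1}" for y
    using that between mono_onD[OF mono, of x0 y] mono_onD[OF mono, of y x1] x0 x1 by force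
  define e where "e = min (t - x0) (x1 - t)"
  have ball: "ball t e \<subseteq> {x0..x1}"
    by (auto simp: e_def dist_real_def)
  have t_in: "t \<in> {x0..x1}"
    using x0 x1 by simp
  have "t \<in> OmX X"
    unfolding OmX_def
  proof (intro CollectI conjI exI[of _ e] ballI)
    show "t \<in> Om" "ball t e \<subseteq> Om" "0 < e"
      using between ball t_in x0 x1 by (auto simp: e_def)
    show "X y = X t" if "y \<in> ball t e" for y
    proof -
      have y_in: "y \<in> {x0..x1}"
        using ball that by blast
      show ?thesis
        using const[OF t_in] const[OF y_in] by simp
    qed
  qed
  then show False
    using t(2) by contradiction
qed

lemma normal_cone_tail_eq_0_strict:
  assumes X: "X \<in> Kcone" and W: "W \<in> normal_cone X" and t: "t \<in> Om"
    and strict: "(\<forall>x\<in>Om. t < x \<longrightarrow> X t < X x) \<or> (\<forall>x\<in>Om. x < t \<longrightarrow> X x < X t)"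
  shows "ip W (indicat_real {t<..}) = 0"
  using strict
proof
  have mono: "mono_on Om X"
    using X by (simp add: Kcone_def)
  assume right: "\<forall>x\<in>Om. t < x \<longrightarrow> X t < X x"
  have "indicat_real {t<..} x = indicat_real {X t<..} (X x)" if "x \<in> Om" for x
    using right that mono_onD[OF mono that t] by (cases "t < x") (auto simp: indicator_def)
  then have "ip W (indicat_real {t<..}) = ip W (\<lambda>x. indicat_real {X t<..} (X x))"
    by (rule ip_cong)
  then show ?thesis
    using normal_cone_orthogonal_level_sets(1)[OF X W] by simp
next
  have mono: "mono_on Om X"
    using X by (simp add: Kcone_def)
  assume left: "\<forall>x\<in>Om. x < t \<longrightarrow> X x < X t"
  have "indicat_real {t..} x = indicat_real {X t..} (X x)" if "x \<in> Om" for x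
    using left that mono_onD[OF mono t that] by (cases "x < t") (auto simp: indicator_def)
  then have "ip W (indicat_real {t..}) = ip W (\<lambda>x. indicat_real {X t..} (X x))"
    by (rule ip_cong)
  then show ?thesis
    using normal_cone_orthogonal_level_sets(2)[OF X W] ip_indicator_atLeast[OF normal_cone_L2[OF W]]
    by simp
qed

lemma normal_cone_tail_eq_0:
  assumes X: "X \<in> Kcone" and W: "W \<in> normal_cone X" and t: "t \<notin> OmX X"
  shows "ip W (indicat_real {t<..}) = 0"
proof -
  consider "t \<le> 0" | "1 \<le> t" | "t \<in> Om"
    unfolding Om_def by fastforce
  then show ?thesis
  proof cases
    case 1
    then have "ip W (indicat_real {t<..}) = ip W (\<lambda>_. 1)"
      by (intro ip_cong) (auto simp: Om_def indicator_def)
    then show ?thesis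
      using normal_cone_orthogonal_const[OF X W] by simp
  next
    case 2
    then have "ip W (indicat_real {t<..}) = ip W (\<lambda>_. 0)"
      by (intro ip_cong) (auto simp: Om_def indicator_def)
    then show ?thesis
      by (simp add: ip_def)
  next
    case 3
    then show ?thesis
      using X W t not_in_OmX_strict_mono_at normal_cone_tail_eq_0_strict by (simp add: Kcone_def)
  qed
qed

lemma normal_cone_set_integral_max_int:
  assumes X: "X \<in> Kcone" and W: "W \<in> normal_cone X" and ab: "max_int X a b"
  shows "(LINT x:{a<..<b}|lebesgue. W x) = 0"
proof -
  have "a < b" "a \<notin> OmX X" "b \<notin> OmX X"
    using ab unfolding max_int_def by auto
  have "(LINT x:{a<..<b}|lebesgue. W x) = ip W (indicat_real {a<..<b})"
    using ip_indicator[OF _ max_int_subset_Om[OF ab]] by simp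
  also have "indicat_real {a<..<b} = (\<lambda>x. indicat_real {a<..} x - indicat_real {b..} x)"
    using \<open>a < b\<close> by (auto simp: fun_eq_iff indicator_def)
  also have "ip W \<dots> = ip W (indicat_real {a<..}) - ip W (indicat_real {b<..})"
    using ip_diff_right[OF L2_indicator L2_indicator normal_cone_L2[OF W]]
      ip_indicator_atLeast[OF normal_cone_L2[OF W]] by simp
  finally show ?thesis
    using normal_cone_tail_eq_0[OF X W] \<open>a \<notin> OmX X\<close> \<open>b \<notin> OmX X\<close> by simp
qed

lemma normal_cone_tail_outside_OmX:
  assumes X: "X \<in> Kcone" and W: "W \<in> normal_cone X" and t: "t \<notin> OmX X"
  shows "(LINT x:{t<..}|lebesgue. indicat_real (Om - OmX X) x * W x) = 0"
proof -
  have W_L2: "W \<in> L2"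
    by (rule normal_cone_L2[OF W])
  have "(LINT x:OmX X|lebesgue. W x * indicat_real {t<..} x) = 0"
    by (rule set_integral_OmX_mult_HX_eq_0[OF W_L2 indicator_in_HX[OF t]])
       (rule normal_cone_set_integral_max_int[OF X W])
  moreover have "(LINT x:Om - OmX X|lebesgue. W x * indicat_real {t<..} x)
      = (LINT x:{t<..}|lebesgue. indicat_real (Om - OmX X) x * W x)"
    unfolding set_lebesgue_integral_def by (simp add: mult_ac)
  ultimately show ?thesis
    using normal_cone_tail_eq_0[OF X W t]
      set_integral_Om_split[OF set_integrable_mult_L2[OF W_L2 L2_indicator[of "{t<..}"]], of X]
    unfolding ip_def by simp
qed

text \<open>Restricted to the complement of Omega_X, a normal vector has vanishing tail integrals.\<close>

lemma normal_cone_AE_outside_OmX: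
  assumes X: "X \<in> Kcone" and W: "W \<in> normal_cone X"
  shows "AE x in lebesgue. x \<in> Om - OmX X \<longrightarrow> W x = 0"
proof -
  define V where "V = (\<lambda>x. indicat_real (Om - OmX X) x * W x)"
  have "(LINT x:{t<..}|lebesgue. V x) = 0" for t
  proof (cases "t \<in> OmX X")
    case True
    then obtain a b where ab: "max_int X a b" "t \<in> {a<..<b}"
      by (rule OmX_obtains_max_int)
    have "indicat_real {t<..} x * V x = indicat_real {a<..} x * V x" for x
    proof (cases "x \<in> {a<..t}")
      case True
      then have "x \<in> OmX X"
        using ab unfolding max_int_def by auto
      then show ?thesis
        by (simp add: V_def)
    qed (use ab(2) in \<open>auto simp: indicator_def\<close>)
    then have "(LINT x:{t<..}|lebesgue. V x) = (LINT x:{a<..}|lebesgue. V x)"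
      unfolding set_lebesgue_integral_def by (simp only: real_scaleR_def)
    then show ?thesis
      using normal_cone_tail_outside_OmX[OF X W] ab(1) by (simp add: V_def max_int_def)
  qed (simp add: V_def normal_cone_tail_outside_OmX[OF X W])
  moreover have "integrable lebesgue V"
    using set_integrable_L2[OF normal_cone_L2[OF W], of "Om - OmX X"]
    by (simp add: V_def set_integrable_def)
  ultimately have "AE x in lebesgue. V x = 0"
    by (rule AE_lebesgue_zero_if_tail_integrals_zero[rotated])
  then show ?thesis
    by eventually_elim (auto simp: V_def indicator_def)
qed

lemma normal_cone_orthogonal_HX:
  assumes "X \<in> Kcone" "W \<in> normal_cone X" "h \<in> HX X"
  shows "ip W h = 0"
  by (rule ip_HX_eq_0[OF normal_cone_L2[OF assms(2)] assms(3) normal_cone_AE_outside_OmX[OF assms(1,2)]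
        normal_cone_set_integral_max_int[OF assms(1,2)]])

lemma HX_subset_tangent_cone:
  assumes "X \<in> Kcone"
  shows "HX X \<subseteq> tangent_cone X"
proof
  fix h assume h: "h \<in> HX X"
  then show "h \<in> tangent_cone X"
    unfolding tangent_cone_def using normal_cone_orthogonal_HX[OF assms _ h]
    by (auto simp: HX_def ip_commute)
qed

section \<open>The condition on the maximal intervals\<close>

lemma ip_diff_projH_indicator:
  assumes U: "U \<in> L2" and ab: "max_int X a b" and m: "m \<in> {a<..<b}"
  shows "ip (\<lambda>x. U x - projH X U x) (indicat_real {m<..})
    = - (LINT x:{a<..m}|lebesgue. U x - projH X U x)"
proof -
  define W where "W = (\<lambda>x. U x - projH X U x)"
  have W_L2: "W \<in> L2"
    unfolding W_def by (rule L2_diff[OF U projH_L2[OF U]])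
  have a: "a \<notin> OmX X"
    using ab unfolding max_int_def by simp
  have sub: "{a<..m} \<subseteq> Om"
    using m max_int_subset_Om[OF ab] by auto
  have "indicat_real {m<..} = (\<lambda>x. indicat_real {a<..} x - indicat_real {a<..m} x)"
    using m by (auto simp: fun_eq_iff indicator_def)
  then have "ip W (indicat_real {m<..}) = ip W (indicat_real {a<..}) - ip W (indicat_real {a<..m})"
    using ip_diff_right[OF L2_indicator L2_indicator W_L2] by simp
  also have "ip W (indicat_real {a<..}) = 0"
    unfolding W_def by (rule ip_diff_projH_HX_eq_0[OF U indicator_in_HX[OF a]])
  also have "ip W (indicat_real {a<..m}) = (LINT x:{a<..m}|lebesgue. W x)"
    by (rule ip_indicator[OF _ sub]) simp
  finally show ?thesis
    unfolding W_def by simp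
qed

lemma projH_le_average_iff_set_integral_nonneg:
  assumes U: "U \<in> L2" and ab: "max_int X a b" and m: "m \<in> {a<..<b}"
  shows "projH X U m \<le> (LINT w:{a<..m}|lebesgue. U w) / (m - a)
    \<longleftrightarrow> 0 \<le> (LINT w:{a<..m}|lebesgue. U w - projH X U w)"
proof -
  define c where "c = (LINT w:{a<..<b}|lebesgue. U w) / (b - a)"
  have sub: "{a<..m} \<subseteq> {a<..<b}" "{a<..<b} \<subseteq> Om"
    using m max_int_subset_Om[OF ab] by auto
  have P: "projH X U x = c" if "x \<in> {a<..<b}" for x
    using projH_max_int[OF ab that] by (simp add: c_def)
  have "(LINT w:{a<..m}|lebesgue. U w - projH X U w) = (LINT w:{a<..m}|lebesgue. U w - c)"
    using P sub(1) by (intro set_lebesgue_integral_cong) auto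
  also have "\<dots> = (LINT w:{a<..m}|lebesgue. U w) - (m - a) * c"
  proof -
    have "{a<..m} \<in> lmeasurable"
      by (intro bounded_set_imp_lmeasurable) auto
    then have "set_integrable lebesgue {a<..m} (\<lambda>_. c)"
      unfolding set_integrable_def lmeasurable_iff_integrable by (simp add: mult.commute)
    then show ?thesis
      using set_integral_diff(2)[OF set_integrable_L2[OF U _ order_trans[OF sub]]]
        set_integral_const[of "{a<..m}" lebesgue c] m by simp
  qed
  finally show ?thesis
    using P[OF m] m by (simp add: pos_le_divide_eq mult.commute)
qed

lemma projH_le_average_iff_ip_indicator_nonpos:
  assumes "U \<in> L2" "max_int X a b" "m \<in> {a<..<b}"
  shows "projH X U m \<le> (LINT w:{a<..m}|lebesgue. U w) / (m - a)
    \<longleftrightarrow> ip (\<lambda>x. U x - projH X U x) (indicat_real {m<..}) \<le> 0"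
  using projH_le_average_iff_set_integral_nonneg[OF assms] ip_diff_projH_indicator[OF assms] by simp

definition projH_below_left_averages :: "(real \<Rightarrow> real) \<Rightarrow> (real \<Rightarrow> real) \<Rightarrow> bool" where
  "projH_below_left_averages X U \<longleftrightarrow>
     (\<forall>a b. max_int X a b \<longrightarrow>
        (\<forall>m\<in>{a<..<b}. projH X U m \<le> (LINT w:{a<..m}|lebesgue. U w) / (m - a)))"

lemma normal_cone_imp_below_left_averages:
  assumes "X \<in> Kcone" "U \<in> L2" "(\<lambda>x. U x - projH X U x) \<in> normal_cone X"
  shows "projH_below_left_averages X U"
  unfolding projH_below_left_averages_def
  using projH_le_average_iff_ip_indicator_nonpos[OF assms(2)] normal_cone_ip_indicator_nonpos[OF assms(1,3)]
  by blast

lemma set_integral_mult_Kcone_max_int_nonpos: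
  assumes X: "X \<in> Kcone" and U: "U \<in> L2" and Y: "Y \<in> Kcone"
    and cond: "projH_below_left_averages X U" and ab: "max_int X a b"
  shows "(LINT x:{a<..<b}|lebesgue. (U x - projH X U x) * Y x) \<le> 0"
proof (rule set_integral_mult_mono_nonpos)
  define W where "W = (\<lambda>x. U x - projH X U x)"
  have W_L2: "W \<in> L2"
    unfolding W_def by (rule L2_diff[OF U projH_L2[OF U]])
  have sub: "{a<..<b} \<subseteq> Om"
    by (rule max_int_subset_Om[OF ab])
  show W_int: "set_integrable lebesgue {a<..<b} (\<lambda>x. U x - projH X U x)"
    using set_integrable_L2[OF W_L2 _ sub] by (simp add: W_def)
  show "set_integrable lebesgue {a<..<b} (\<lambda>x. (U x - projH X U x) * Y x)"
    using set_integrable_subset[OF set_integrable_mult_L2[OF W_L2] _ sub] Y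
    by (simp add: W_def Kcone_def)
  show "mono_on {a<..<b} Y"
    using Y sub by (auto simp: Kcone_def intro: mono_on_subset)
  show "(LINT x:{a<..<b}|lebesgue. U x - projH X U x) = 0"
    by (rule set_integral_diff_projH_max_int[OF U ab])
  show "0 \<le> (LINT x:{a<..<t}|lebesgue. U x - projH X U x)" if t: "t \<in> {a<..<b}" for t
  proof -
    have "(LINT x:{a<..<t}|lebesgue. U x - projH X U x) = (LINT x:{a<..t}|lebesgue. U x - projH X U x)"
      using t by (intro set_integral_cong_except_point[where c = t] set_integrable_imp_set_borel_measurable
          set_integrable_subset[OF W_int]) auto
    then show ?thesis
      using cond projH_le_average_iff_set_integral_nonneg[OF U ab t] ab t
      unfolding projH_below_left_averages_def by simp
  qed
qed

lemma below_left_averages_imp_normal_cone: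
  assumes X: "X \<in> Kcone" and U: "U \<in> L2" and cond: "projH_below_left_averages X U"
  shows "(\<lambda>x. U x - projH X U x) \<in> normal_cone X"
proof -
  define W where "W = (\<lambda>x. U x - projH X U x)"
  have W_L2: "W \<in> L2"
    unfolding W_def by (rule L2_diff[OF U projH_L2[OF U]])
  have "ip W (\<lambda>x. Y x - X x) \<le> 0" if Y: "Y \<in> Kcone" for Y
  proof -
    have Y_L2: "Y \<in> L2" and X_L2: "X \<in> L2"
      using X Y by (simp_all add: Kcone_def)
    have "ip W (\<lambda>x. Y x - X x) = ip W Y - ip W X"
      by (rule ip_diff_right[OF Y_L2 X_L2 W_L2])
    also have "ip W X = 0"
      unfolding W_def by (rule ip_diff_projH_HX_eq_0[OF U Kcone_in_HX[OF X]])
    also have "ip W Y = (LINT x:OmX X|lebesgue. W x * Y x)"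
    proof -
      have "(LINT x:Om - OmX X|lebesgue. W x * Y x) = 0"
        unfolding set_lebesgue_integral_def
        by (intro integral_eq_zero_AE AE_I2) (auto simp: W_def projH_outside indicator_def)
      then show ?thesis
        unfolding ip_def using set_integral_Om_split[OF set_integrable_mult_L2[OF W_L2 Y_L2], of X]
        by simp
    qed
    also have "\<dots> \<le> 0"
    proof (rule set_integral_OmX_nonpos)
      show "set_integrable lebesgue (OmX X) (\<lambda>x. W x * Y x)"
        by (rule set_integrable_subset[OF set_integrable_mult_L2[OF W_L2 Y_L2] _ OmX_subset_Om]) simp
    qed (use set_integral_mult_Kcone_max_int_nonpos[OF X U Y cond] in \<open>simp add: W_def\<close>)
    finally show ?thesis
      by simp
  qed
  then show ?thesis
    unfolding normal_cone_def W_def using W_L2 by (simp add: W_def)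
qed

lemma is_proj_variational_inequality:
  assumes proj: "is_proj T U P" and U: "U \<in> L2" and T: "T \<subseteq> L2" and D: "D \<in> T"
    and ray: "\<And>t. 0 < t \<Longrightarrow> (\<lambda>x. P x + t * D x) \<in> T"
  shows "ip (\<lambda>x. U x - P x) D \<le> 0"
proof (rule ccontr)
  define W where "W = (\<lambda>x. U x - P x)"
  assume "\<not> ?thesis"
  then have pos: "ip W D > 0"
    by (simp add: W_def)
  have P_L2: "P \<in> L2" and D_L2: "D \<in> L2"
    using proj D T unfolding is_proj_def by auto
  have W_L2: "W \<in> L2"
    unfolding W_def by (rule L2_diff[OF U P_L2])
  define t where "t = ip W D / (ip D D + 1)"
  have t: "t > 0"
    using pos ip_self_nonneg[of D] by (simp add: t_def)
  have "(\<lambda>x. U x - (P x + t * D x)) = (\<lambda>x. W x + (- t) * D x)"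
    by (auto simp: W_def)
  moreover have "ip W W \<le> ip (\<lambda>x. U x - (P x + t * D x)) (\<lambda>x. U x - (P x + t * D x))"
    using proj ray[OF t] unfolding is_proj_def W_def by auto
  ultimately have "ip W W \<le> ip (\<lambda>x. W x + (- t) * D x) (\<lambda>x. W x + (- t) * D x)"
    by (simp only:)
  also have "\<dots> = ip W W + 2 * ip W (\<lambda>x. (- t) * D x) + ip (\<lambda>x. (- t) * D x) (\<lambda>x. (- t) * D x)"
    by (rule ip_add_self[OF W_L2 L2_cmult[OF D_L2]])
  also have "\<dots> = ip W W - t * (2 * ip W D - t * ip D D)"
    unfolding ip_cmult_left ip_cmult_right by (simp add: algebra_simps)
  finally have "2 * ip W D \<le> t * ip D D"
    using t by (simp add: mult_le_0_iff)
  also have "\<dots> < t * (ip D D + 1)"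
    using t by simp
  also have "\<dots> = ip W D"
    using ip_self_nonneg[of D] by (simp add: t_def)
  finally show False
    using pos by simp
qed

lemma is_projI_polar:
  assumes P: "P \<in> T" and T: "T \<subseteq> L2" and U: "U \<in> L2"
    and orth: "ip P (\<lambda>x. U x - P x) = 0" and polar: "\<And>V. V \<in> T \<Longrightarrow> ip V (\<lambda>x. U x - P x) \<le> 0"
  shows "is_proj T U P"
  unfolding is_proj_def
proof (intro conjI ballI P)
  fix V assume V: "V \<in> T"
  define W where "W = (\<lambda>x. U x - P x)"
  define D where "D = (\<lambda>x. P x - V x)"
  have P_L2: "P \<in> L2" and V_L2: "V \<in> L2"
    using P V T by auto
  have W_L2: "W \<in> L2" and D_L2: "D \<in> L2"
    unfolding W_def D_def by (auto intro: L2_diff U P_L2 V_L2)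
  have "ip (\<lambda>x. U x - V x) (\<lambda>x. U x - V x) = ip W W + 2 * ip D W + ip D D"
    using ip_add_self[OF W_L2 D_L2] ip_commute[of W D] by (simp add: W_def D_def)
  also have "ip D W = ip P W - ip V W"
    unfolding D_def by (rule ip_diff_left[OF P_L2 V_L2 W_L2])
  finally show "ip (\<lambda>x. U x - P x) (\<lambda>x. U x - P x) \<le> ip (\<lambda>x. U x - V x) (\<lambda>x. U x - V x)"
    using orth polar[OF V] ip_self_nonneg[of D] by (simp add: W_def)
qed

lemma tangent_cone_add_cmult:
  assumes "P \<in> tangent_cone X" "D \<in> tangent_cone X" "0 \<le> t"
  shows "(\<lambda>x. P x + t * D x) \<in> tangent_cone X"
proof -
  have L2: "P \<in> L2" "D \<in> L2" "(\<lambda>x. t * D x) \<in> L2"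
    using assms L2_cmult unfolding tangent_cone_def by auto
  have "ip (\<lambda>x. P x + t * D x) W \<le> 0" if "W \<in> normal_cone X" for W
    using assms that ip_add_left[OF L2(1,3) normal_cone_L2[OF that]]
    by (auto simp: tangent_cone_def ip_cmult_left intro!: add_nonpos_nonpos mult_nonneg_nonpos)
  then show ?thesis
    unfolding tangent_cone_def using L2_add[OF L2(1,3)] by simp
qed

lemma indicator_in_tangent_cone:
  "X \<in> Kcone \<Longrightarrow> indicat_real {m<..} \<in> tangent_cone X"
  unfolding tangent_cone_def using normal_cone_ip_indicator_nonpos
  by (auto simp: L2_indicator ip_commute)

lemma is_proj_imp_below_left_averages:
  assumes X: "X \<in> Kcone" and U: "U \<in> L2" and proj: "is_proj (tangent_cone X) U (projH X U)"
  shows "projH_below_left_averages X U"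
  unfolding projH_below_left_averages_def
proof (intro allI impI ballI)
  fix a b m assume "max_int X a b" "m \<in> {a<..<b}"
  moreover have "ip (\<lambda>x. U x - projH X U x) (indicat_real {m<..}) \<le> 0"
  proof (rule is_proj_variational_inequality[OF proj U])
    show "tangent_cone X \<subseteq> L2"
      unfolding tangent_cone_def by blast
    show "(\<lambda>x. projH X U x + t * indicat_real {m<..} x) \<in> tangent_cone X" if "0 < t" for t
      using proj that indicator_in_tangent_cone[OF X]
      by (intro tangent_cone_add_cmult) (auto simp: is_proj_def)
  qed (rule indicator_in_tangent_cone[OF X])
  ultimately show "projH X U m \<le> (LINT w:{a<..m}|lebesgue. U w) / (m - a)"
    using projH_le_average_iff_ip_indicator_nonpos[OF U] by blast
qed

lemma below_left_averages_imp_is_proj: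
  assumes X: "X \<in> Kcone" and U: "U \<in> L2" and cond: "projH_below_left_averages X U"
  shows "is_proj (tangent_cone X) U (projH X U)"
proof (rule is_projI_polar[OF _ _ U])
  have N: "(\<lambda>x. U x - projH X U x) \<in> normal_cone X"
    by (rule below_left_averages_imp_normal_cone[OF X U cond])
  show "projH X U \<in> tangent_cone X"
    using HX_subset_tangent_cone[OF X] projH_in_HX[OF U] by blast
  show "tangent_cone X \<subseteq> L2"
    unfolding tangent_cone_def by blast
  show "ip (projH X U) (\<lambda>x. U x - projH X U x) = 0"
    using ip_diff_projH_HX_eq_0[OF U projH_in_HX[OF U]] by (simp add: ip_commute)
  show "ip V (\<lambda>x. U x - projH X U x) \<le> 0" if "V \<in> tangent_cone X" for V
    using that N unfolding tangent_cone_def by blast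
qed

theorem lemma5p2:
  fixes X U :: "real \<Rightarrow> real"
  assumes "X \<in> Kcone" and "U \<in> L2"
  shows "((\<lambda>x. U x - projH X U x) \<in> normal_cone X \<longleftrightarrow>
            (\<forall>a b. max_int X a b \<longrightarrow>
               (\<forall>m\<in>{a<..<b}. projH X U m \<le> (LINT w:{a<..m}|lebesgue. U w) / (m - a))))
       \<and> (is_proj (tangent_cone X) U (projH X U) \<longleftrightarrow>
            (\<forall>a b. max_int X a b \<longrightarrow>
               (\<forall>m\<in>{a<..<b}. projH X U m \<le> (LINT w:{a<..m}|lebesgue. U w) / (m - a))))"
  using normal_cone_imp_below_left_averages[OF assms] below_left_averages_imp_normal_cone[OF assms]
    is_proj_imp_below_left_averages[OF assms] below_left_averages_imp_is_proj[OF assms]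
  unfolding projH_below_left_averages_def by blast

end
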